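(* Let $F$ be a field with $\operatorname{char}F\ne2$ and let $L/F$ be a Galois extension with $\operatorname{Gal}(L/F)\cong G_1$. Then there is a unique quadratic extension $F(\sqrt a)$ of $F$ such that $F\subseteq F(\sqrt a)\subseteq E\subseteq L$ for some subfield $E$ of $L$ with $E/F$ Galois and $\operatorname{Gal}(E/F)\cong C$. The element $-a$ is not rigid.
   Context: $C$ is the cyclic group of order 4. An element $c\in\dot F\setminus(F^2\cup-F^2)$ is rigid if the set of nonzero values of $x_1^2+cx_2^2$ equals $\dot F^2\cup c\dot F^2$, and nonrigid otherwise. Commutators $[\sigma,\tau]=\sigma^{-1}\tau^{-1}\sigma\tau$. $G_1$ is the group generated by $x,y$ with relations $x^4=y^2=1$, $[x,y]^2=[[x,y],x]^2=1$, and $[[x,y],x]$ commutes with $x$ and $y$. *)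

theory Defs
  imports "HOL-Algebra.Elementary_Groups" "HOL-Algebra.Generated_Groups"
          "HOL-Computational_Algebra.Polynomial"
begin

definition is_subfield :: "'l::field set \<Rightarrow> bool" where
  "is_subfield K \<longleftrightarrow> 0 \<in> K \<and> 1 \<in> K \<and>
     (\<forall>x\<in>K. \<forall>y\<in>K. x + y \<in> K \<and> x - y \<in> K \<and> x * y \<in> K) \<and>
     (\<forall>x\<in>K. x \<noteq> 0 \<longrightarrow> inverse x \<in> K)"

definition adjoin :: "'l::field set \<Rightarrow> 'l \<Rightarrow> 'l set" where
  "adjoin F r = \<Inter>{S. is_subfield S \<and> F \<subseteq> S \<and> r \<in> S}"

text \<open>Gal(K/F): field automorphisms of K fixing F pointwise (extended by the
  identity outside K so that they form a group under composition)\<close>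
definition gal_auts :: "'l::field set \<Rightarrow> 'l set \<Rightarrow> ('l \<Rightarrow> 'l) set" where
  "gal_auts F K = {\<sigma>. bij_betw \<sigma> K K
        \<and> (\<forall>x\<in>K. \<forall>y\<in>K. \<sigma> (x + y) = \<sigma> x + \<sigma> y \<and> \<sigma> (x * y) = \<sigma> x * \<sigma> y)
        \<and> \<sigma> 1 = 1
        \<and> (\<forall>x\<in>F. \<sigma> x = x)
        \<and> (\<forall>x. x \<notin> K \<longrightarrow> \<sigma> x = x)}"

definition gal_group :: "'l::field set \<Rightarrow> 'l set \<Rightarrow> ('l \<Rightarrow> 'l) monoid" where
  "gal_group F K = \<lparr> carrier = gal_auts F K, monoid.mult = (\<lambda>\<sigma> \<tau>. \<sigma> \<circ> \<tau>), one = id \<rparr>"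

definition algebraic_ext :: "'l::field set \<Rightarrow> 'l set \<Rightarrow> bool" where
  "algebraic_ext F K \<longleftrightarrow>
     (\<forall>x\<in>K. \<exists>p::'l poly. p \<noteq> 0 \<and> (\<forall>i. coeff p i \<in> F) \<and> poly p x = 0)"

definition galois_ext :: "'l::field set \<Rightarrow> 'l set \<Rightarrow> bool" where
  "galois_ext F K \<longleftrightarrow> is_subfield F \<and> is_subfield K \<and> F \<subseteq> K \<and> algebraic_ext F K \<and>
     {x\<in>K. \<forall>\<sigma>\<in>carrier (gal_group F K). \<sigma> x = x} = F"

definition rigid :: "'l::field set \<Rightarrow> 'l \<Rightarrow> bool" where
  "rigid F c \<longleftrightarrow> c \<in> F - {0} \<and> c \<notin> {t * t |t. t \<in> F} \<and> c \<notin> {- (t * t) |t. t \<in> F} \<and>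
     {x1 * x1 + c * x2 * x2 |x1 x2. x1 \<in> F \<and> x2 \<in> F} - {0}
       = {t * t |t. t \<in> F - {0}} \<union> {c * t * t |t. t \<in> F - {0}}"

abbreviation C4 :: "int monoid" where "C4 \<equiv> integer_mod_group 4"

text \<open>Free group on generators of type 'g: freely reduced words of letters
  (g, b), where b = True marks the inverse of g.\<close>
definition free_reduce :: "('g \<times> bool) list \<Rightarrow> ('g \<times> bool) list" where
  "free_reduce xs = foldr (\<lambda>x w. case w of [] \<Rightarrow> [x]
       | y # ys \<Rightarrow> (if fst x = fst y \<and> snd x \<noteq> snd y then ys else x # w)) xs []"

definition free_grp :: "(('g \<times> bool) list) monoid" where
  "free_grp = \<lparr> carrier = {w. free_reduce w = w},
      monoid.mult = (\<lambda>u v. free_reduce (u @ v)), one = [] \<rparr>"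

definition fg_comm :: "('g \<times> bool) list \<Rightarrow> ('g \<times> bool) list \<Rightarrow> ('g \<times> bool) list" where
  "fg_comm s t = inv\<^bsub>free_grp\<^esub> s \<otimes>\<^bsub>free_grp\<^esub> inv\<^bsub>free_grp\<^esub> t
       \<otimes>\<^bsub>free_grp\<^esub> s \<otimes>\<^bsub>free_grp\<^esub> t"

definition G1_relators :: "((bool \<times> bool) list) set" where
  "G1_relators = (let x = [(True, False)]; y = [(False, False)];
       c = fg_comm x y; d = fg_comm c x in
     { x [^]\<^bsub>free_grp\<^esub> (4::nat), y [^]\<^bsub>free_grp\<^esub> (2::nat),
       c [^]\<^bsub>free_grp\<^esub> (2::nat), d [^]\<^bsub>free_grp\<^esub> (2::nat),
       fg_comm d x, fg_comm d y })"

definition G1 :: "((bool \<times> bool) list set) monoid" where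
  "G1 = free_grp Mod
     generate free_grp (\<Union>g\<in>carrier free_grp.
        (\<lambda>r. g \<otimes>\<^bsub>free_grp\<^esub> r \<otimes>\<^bsub>free_grp\<^esub> inv\<^bsub>free_grp\<^esub> g) ` G1_relators)"

end

theory Submission
  imports Defs
begin

(* Map Gal(L/F) = G1 = <x, y> onto a group Q16 of order 16. Characters of Q16, or of its
   index-2 subgroup H, the image of <x^2, y, x y x^-1>, have eigenvectors in L: by Dedekind's
   lemma some resolvent  sum_g chi(g) g(w)  is nonzero. The eigenvector r of the character with
   x -> -1, y -> 1 has r^2 = a in F, and F(r) lies in the fixed field of the kernel of
   Gal(L/F) -> Z/4 (x -> 1, y -> 0), a cyclic quartic extension. Conversely, if F(sqrt a') lies
   in a cyclic quartic E, then E is stable under Gal(L/F) and y restricts to an involution of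
   Gal(E/F) = C4, i.e. to 1 or sigma^2, both fixing sqrt a'; hence sqrt a' is again such an
   eigenvector and F(sqrt a') = F(r).
   For non-rigidity, eigenvectors theta of characters of H give elements gamma = x(theta)/theta
   of F(r) with norm -1, resp. with norm 1/b up to a square, where b = s^2 for the eigenvector s
   of the character x -> 1, y -> -1. Rigidity of -a would make -1 a square, and then force b into
   F^2 or (-a) F^2, i.e. s into F or F i r; both contradict y(s) = -s. *)

section \<open>Free groups\<close>

definition cancel_step :: "'g \<times> bool \<Rightarrow> ('g \<times> bool) list \<Rightarrow> ('g \<times> bool) list" where
  "cancel_step x w = (case w of [] \<Rightarrow> [x]
       | y # ys \<Rightarrow> (if fst x = fst y \<and> snd x \<noteq> snd y then ys else x # w))"

lemma free_reduce_eq_foldr: "free_reduce xs = foldr cancel_step xs []"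
  unfolding free_reduce_def cancel_step_def by (rule refl)

fun reduced :: "('g \<times> bool) list \<Rightarrow> bool" where
  "reduced [] = True"
| "reduced [x] = True"
| "reduced (x # y # ys) = (\<not> (fst x = fst y \<and> snd x \<noteq> snd y) \<and> reduced (y # ys))"

lemma reduced_Cons_tl: "reduced (x # w) \<Longrightarrow> reduced w"
  by (cases w) auto

lemma reduced_cancel_step: "reduced w \<Longrightarrow> reduced (cancel_step x w)"
  by (cases w) (auto simp: cancel_step_def dest: reduced_Cons_tl)

lemma reduced_foldr_cancel_step: "reduced w \<Longrightarrow> reduced (foldr cancel_step z w)"
  by (induction z) (auto intro: reduced_cancel_step)

lemma reduced_free_reduce: "reduced (free_reduce w)"
  unfolding free_reduce_eq_foldr by (rule reduced_foldr_cancel_step) simp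

lemma cancel_step_reduced_Cons: "reduced (x # w) \<Longrightarrow> cancel_step x w = x # w"
  by (cases w) (auto simp: cancel_step_def)

lemma free_reduce_reduced: "reduced w \<Longrightarrow> free_reduce w = w"
proof (induction w)
  case Nil
  then show ?case by (simp add: free_reduce_eq_foldr)
next
  case (Cons x w)
  then have "free_reduce w = w" using reduced_Cons_tl by blast
  then show ?case using Cons.prems cancel_step_reduced_Cons by (simp add: free_reduce_eq_foldr)
qed

lemma free_reduce_fixed_iff: "free_reduce w = w \<longleftrightarrow> reduced w"
  using free_reduce_reduced reduced_free_reduce by metis

lemma carrier_free_grp: "carrier free_grp = {w. reduced w}"
  by (simp add: free_grp_def free_reduce_fixed_iff)

definition letter_inv :: "'g \<times> bool \<Rightarrow> 'g \<times> bool" where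
  "letter_inv x = (fst x, \<not> snd x)"

lemma letter_inv_letter_inv [simp]: "letter_inv (letter_inv x) = x"
  by (simp add: letter_inv_def)

lemma cancel_step_cancel_step_letter_inv:
  assumes "reduced w"
  shows "cancel_step x (cancel_step (letter_inv x) w) = w"
proof (cases w)
  case (Cons y ys)
  show ?thesis
  proof (cases "fst (letter_inv x) = fst y \<and> snd (letter_inv x) \<noteq> snd y")
    case True
    then have "x = y" by (cases x, cases y) (auto simp: letter_inv_def)
    then show ?thesis
      using True Cons assms cancel_step_reduced_Cons by (simp add: cancel_step_def)
  next
    case False
    then have "cancel_step (letter_inv x) w = letter_inv x # w" using Cons by (simp add: cancel_step_def)
    then show ?thesis by (simp add: cancel_step_def letter_inv_def)
  qed
qed (simp add: cancel_step_def letter_inv_def)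

lemma foldr_cancel_step_cancel_step:
  assumes "reduced w"
  shows "foldr cancel_step (cancel_step x v) w = cancel_step x (foldr cancel_step v w)"
proof (cases v)
  case (Cons y ys)
  show ?thesis
  proof (cases "fst x = fst y \<and> snd x \<noteq> snd y")
    case True
    then have "x = letter_inv y" by (cases x, cases y) (auto simp: letter_inv_def)
    then show ?thesis
      using True Cons cancel_step_cancel_step_letter_inv[of "foldr cancel_step ys w" "letter_inv y"]
        reduced_foldr_cancel_step[OF assms]
      by (simp add: cancel_step_def)
  next
    case False
    then have "cancel_step x v = x # v" using Cons by (simp add: cancel_step_def)
    then show ?thesis by simp
  qed
qed (simp add: cancel_step_def)

lemma foldr_cancel_step_free_reduce:
  "reduced w \<Longrightarrow> foldr cancel_step (free_reduce z) w = foldr cancel_step z w"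
  by (induction z) (simp_all add: free_reduce_eq_foldr foldr_cancel_step_cancel_step)

lemma free_reduce_append: "free_reduce (u @ v) = foldr cancel_step u (free_reduce v)"
  by (simp add: free_reduce_eq_foldr)

lemma free_reduce_assoc:
  "free_reduce (free_reduce (u @ v) @ w) = free_reduce (u @ free_reduce (v @ w))"
proof -
  have "free_reduce (free_reduce (u @ v) @ w) = foldr cancel_step (u @ v) (free_reduce w)"
    by (metis free_reduce_append foldr_cancel_step_free_reduce reduced_free_reduce)
  moreover have "free_reduce (u @ free_reduce (v @ w)) = foldr cancel_step (u @ v) (free_reduce w)"
    by (simp add: free_reduce_append free_reduce_reduced[OF reduced_foldr_cancel_step[OF reduced_free_reduce]])
  ultimately show ?thesis by simp
qed

definition word_inv :: "('g \<times> bool) list \<Rightarrow> ('g \<times> bool) list" where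
  "word_inv w = rev (map letter_inv w)"

lemma foldr_cancel_step_word_inv:
  "reduced v \<Longrightarrow> foldr cancel_step (word_inv w) (foldr cancel_step w v) = v"
proof (induction w)
  case (Cons x w)
  then show ?case
    using cancel_step_cancel_step_letter_inv[of "foldr cancel_step w v" "letter_inv x"]
      reduced_foldr_cancel_step[OF Cons.prems]
    by (simp add: word_inv_def)
qed (simp add: word_inv_def)

lemma group_free_grp: "group (free_grp :: ('g \<times> bool) list monoid)"
proof (rule groupI)
  fix x y z :: "('g \<times> bool) list"
  assume x: "x \<in> carrier free_grp"
  show "\<exists>y\<in>carrier free_grp. y \<otimes>\<^bsub>free_grp\<^esub> x = \<one>\<^bsub>free_grp\<^esub>"
  proof
    have "reduced x" using x by (simp add: carrier_free_grp)
    moreover have "foldr cancel_step x [] = x"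
      using x by (simp add: free_grp_def free_reduce_eq_foldr)
    ultimately show "free_reduce (word_inv x) \<otimes>\<^bsub>free_grp\<^esub> x = \<one>\<^bsub>free_grp\<^esub>"
      using foldr_cancel_step_word_inv[of "[]" x] foldr_cancel_step_free_reduce[of x "word_inv x"]
      by (simp add: free_grp_def free_reduce_append free_reduce_reduced)
  qed (simp add: carrier_free_grp reduced_free_reduce)
next
  show "\<one>\<^bsub>free_grp\<^esub> \<in> carrier free_grp"
    by (simp add: free_grp_def free_reduce_eq_foldr)
qed (simp_all add: free_grp_def free_reduce_fixed_iff reduced_free_reduce free_reduce_assoc)

definition letter_eval :: "('a, 'b) monoid_scheme \<Rightarrow> ('g \<Rightarrow> 'a) \<Rightarrow> 'g \<times> bool \<Rightarrow> 'a" where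
  "letter_eval H f x = (if snd x then inv\<^bsub>H\<^esub> f (fst x) else f (fst x))"

primrec word_eval :: "('a, 'b) monoid_scheme \<Rightarrow> ('g \<Rightarrow> 'a) \<Rightarrow> ('g \<times> bool) list \<Rightarrow> 'a" where
  "word_eval H f [] = \<one>\<^bsub>H\<^esub>"
| "word_eval H f (x # w) = letter_eval H f x \<otimes>\<^bsub>H\<^esub> word_eval H f w"

context
  fixes H :: "('a, 'b) monoid_scheme" and f :: "'g \<Rightarrow> 'a"
  assumes H: "group H" and f: "range f \<subseteq> carrier H"
begin

interpretation H: group H by (rule H)

lemma letter_eval_closed: "letter_eval H f x \<in> carrier H"
  using f by (auto simp: letter_eval_def)

lemma word_eval_closed: "word_eval H f w \<in> carrier H"
  by (induction w) (auto simp: letter_eval_closed)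

lemma word_eval_cancel_step: "word_eval H f (cancel_step x w) = word_eval H f (x # w)"
proof (cases w)
  case (Cons y ys)
  show ?thesis
  proof (cases "fst x = fst y \<and> snd x \<noteq> snd y")
    case True
    then have "letter_eval H f x \<otimes>\<^bsub>H\<^esub> letter_eval H f y = \<one>\<^bsub>H\<^esub>"
      using f by (cases x, cases y) (auto simp: letter_eval_def image_subset_iff)
    then show ?thesis
      using True Cons letter_eval_closed word_eval_closed
      by (simp add: cancel_step_def H.m_assoc[symmetric])
  next
    case False
    then have "cancel_step x w = x # w" using Cons by (simp add: cancel_step_def)
    then show ?thesis by simp
  qed
qed (simp add: cancel_step_def)

lemma word_eval_free_reduce: "word_eval H f (free_reduce w) = word_eval H f w"
  by (induction w) (simp_all add: free_reduce_eq_foldr word_eval_cancel_step)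

lemma word_eval_append: "word_eval H f (u @ v) = word_eval H f u \<otimes>\<^bsub>H\<^esub> word_eval H f v"
  by (induction u) (simp_all add: word_eval_closed letter_eval_closed H.m_assoc)

lemma word_eval_hom: "word_eval H f \<in> hom free_grp H"
  by (rule homI) (simp_all add: word_eval_closed free_grp_def word_eval_free_reduce word_eval_append)

end

lemma free_grp_inv_letter: "inv\<^bsub>free_grp\<^esub> [(g, False)] = [(g, True)]"
  by (rule group.inv_equality[OF group_free_grp])
     (simp_all add: free_grp_def free_reduce_fixed_iff free_reduce_eq_foldr cancel_step_def)

lemma free_grp_generated: "carrier free_grp = generate free_grp (range (\<lambda>g. [(g, False)]))"
proof
  show "generate free_grp (range (\<lambda>g. [(g, False)])) \<subseteq> carrier free_grp"
    by (rule group.generate_incl[OF group_free_grp]) (auto simp: carrier_free_grp)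
  have "w \<in> generate free_grp (range (\<lambda>g. [(g, False)]))" if "reduced w" for w
    using that
  proof (induction w)
    case Nil
    then show ?case using generate.one[of free_grp] by (simp add: free_grp_def)
  next
    case (Cons x w)
    obtain g s where x: "x = (g, s)" by (cases x)
    have "[x] \<in> generate free_grp (range (\<lambda>g. [(g, False)]))"
      using generate.incl[of "[(g, False)]" _ free_grp] generate.inv[of "[(g, False)]" _ free_grp]
      by (cases s) (auto simp: x free_grp_inv_letter)
    moreover have "[x] \<otimes>\<^bsub>free_grp\<^esub> w = x # w"
      using cancel_step_reduced_Cons[OF Cons.prems] free_reduce_reduced[OF reduced_Cons_tl[OF Cons.prems]]
      by (simp add: free_grp_def free_reduce_append)
    ultimately show ?case using Cons reduced_Cons_tl by (metis generate.eng)
  qed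
  then show "carrier free_grp \<subseteq> generate free_grp (range (\<lambda>g. [(g, False)]))"
    by (auto simp: carrier_free_grp)
qed

section \<open>The group \<open>G\<^sub>1\<close>\<close>

definition commutator :: "('a, 'b) monoid_scheme \<Rightarrow> 'a \<Rightarrow> 'a \<Rightarrow> 'a" where
  "commutator G s t = inv\<^bsub>G\<^esub> s \<otimes>\<^bsub>G\<^esub> inv\<^bsub>G\<^esub> t \<otimes>\<^bsub>G\<^esub> s \<otimes>\<^bsub>G\<^esub> t"

lemma (in group) commutator_closed [simp]:
  "s \<in> carrier G \<Longrightarrow> t \<in> carrier G \<Longrightarrow> commutator G s t \<in> carrier G"
  by (simp add: commutator_def)

lemma (in group) commutator_eq_one_iff:
  assumes "s \<in> carrier G" "t \<in> carrier G"
  shows "commutator G s t = \<one> \<longleftrightarrow> s \<otimes> t = t \<otimes> s"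
proof -
  have "commutator G s t = inv (t \<otimes> s) \<otimes> (s \<otimes> t)"
    using assms by (simp add: commutator_def inv_mult_group m_assoc)
  then show ?thesis
    using assms by (metis inv_closed m_closed inv_comm inv_equality r_inv)
qed

lemma (in group_hom) hom_commutator:
  "s \<in> carrier G \<Longrightarrow> t \<in> carrier G \<Longrightarrow> h (commutator G s t) = commutator H (h s) (h t)"
  by (simp add: commutator_def)

definition G1_relations :: "('a, 'b) monoid_scheme \<Rightarrow> 'a \<Rightarrow> 'a \<Rightarrow> bool" where
  "G1_relations H a b \<longleftrightarrow> a \<in> carrier H \<and> b \<in> carrier H \<and>
     a [^]\<^bsub>H\<^esub> (4::nat) = \<one>\<^bsub>H\<^esub> \<and> b [^]\<^bsub>H\<^esub> (2::nat) = \<one>\<^bsub>H\<^esub> \<and>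
     commutator H a b [^]\<^bsub>H\<^esub> (2::nat) = \<one>\<^bsub>H\<^esub> \<and>
     commutator H (commutator H a b) a [^]\<^bsub>H\<^esub> (2::nat) = \<one>\<^bsub>H\<^esub> \<and>
     commutator H (commutator H (commutator H a b) a) a = \<one>\<^bsub>H\<^esub> \<and>
     commutator H (commutator H (commutator H a b) a) b = \<one>\<^bsub>H\<^esub>"

lemma (in group_hom) G1_relations_hom:
  "G1_relations G a b \<Longrightarrow> G1_relations H (h a) (h b)"
  unfolding G1_relations_def by (simp flip: hom_commutator hom_nat_pow)

definition gen_x :: "(bool \<times> bool) list" where "gen_x = [(True, False)]"
definition gen_y :: "(bool \<times> bool) list" where "gen_y = [(False, False)]"

lemma G1_relators_eq: "G1_relators =
    {gen_x [^]\<^bsub>free_grp\<^esub> (4::nat), gen_y [^]\<^bsub>free_grp\<^esub> (2::nat),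
     commutator free_grp gen_x gen_y [^]\<^bsub>free_grp\<^esub> (2::nat),
     commutator free_grp (commutator free_grp gen_x gen_y) gen_x [^]\<^bsub>free_grp\<^esub> (2::nat),
     commutator free_grp (commutator free_grp (commutator free_grp gen_x gen_y) gen_x) gen_x,
     commutator free_grp (commutator free_grp (commutator free_grp gen_x gen_y) gen_x) gen_y}"
  by (simp add: G1_relators_def fg_comm_def commutator_def gen_x_def gen_y_def Let_def)

definition G1_kernel :: "(bool \<times> bool) list set" where
  "G1_kernel = generate free_grp (\<Union>g\<in>carrier free_grp.
     (\<lambda>r. g \<otimes>\<^bsub>free_grp\<^esub> r \<otimes>\<^bsub>free_grp\<^esub> inv\<^bsub>free_grp\<^esub> g) ` G1_relators)"

definition G1_x :: "(bool \<times> bool) list set" where "G1_x = G1_kernel #>\<^bsub>free_grp\<^esub> gen_x"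
definition G1_y :: "(bool \<times> bool) list set" where "G1_y = G1_kernel #>\<^bsub>free_grp\<^esub> gen_y"

interpretation FG: group "free_grp :: (bool \<times> bool) list monoid"
  by (rule group_free_grp)

lemma G1_eq: "G1 = free_grp Mod G1_kernel"
  by (simp add: G1_def G1_kernel_def)

lemma gen_xy_carrier [simp]: "gen_x \<in> carrier free_grp" "gen_y \<in> carrier free_grp"
  by (simp_all add: gen_x_def gen_y_def carrier_free_grp)

lemma G1_relators_carrier: "G1_relators \<subseteq> carrier free_grp"
  unfolding G1_relators_eq by simp

lemma G1_kernel_normal: "G1_kernel \<lhd> free_grp"
  unfolding G1_kernel_def
proof (rule FG.normal_generateI)
  fix h g :: "(bool \<times> bool) list"
  assume "h \<in> (\<Union>g\<in>carrier free_grp.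
      (\<lambda>r. g \<otimes>\<^bsub>free_grp\<^esub> r \<otimes>\<^bsub>free_grp\<^esub> inv\<^bsub>free_grp\<^esub> g) ` G1_relators)"
    and g: "g \<in> carrier free_grp"
  then obtain g' r where g': "g' \<in> carrier free_grp" and r: "r \<in> G1_relators"
    and h: "h = g' \<otimes>\<^bsub>free_grp\<^esub> r \<otimes>\<^bsub>free_grp\<^esub> inv\<^bsub>free_grp\<^esub> g'"
    by auto
  have "g \<otimes>\<^bsub>free_grp\<^esub> h \<otimes>\<^bsub>free_grp\<^esub> inv\<^bsub>free_grp\<^esub> g
     = (g \<otimes>\<^bsub>free_grp\<^esub> g') \<otimes>\<^bsub>free_grp\<^esub> r \<otimes>\<^bsub>free_grp\<^esub> inv\<^bsub>free_grp\<^esub> (g \<otimes>\<^bsub>free_grp\<^esub> g')"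
    using g g' r G1_relators_carrier by (auto simp: h FG.m_assoc FG.inv_mult_group)
  then show "g \<otimes>\<^bsub>free_grp\<^esub> h \<otimes>\<^bsub>free_grp\<^esub> inv\<^bsub>free_grp\<^esub> g
      \<in> (\<Union>g\<in>carrier free_grp. (\<lambda>r. g \<otimes>\<^bsub>free_grp\<^esub> r \<otimes>\<^bsub>free_grp\<^esub> inv\<^bsub>free_grp\<^esub> g) ` G1_relators)"
    using g g' r by auto
qed (use G1_relators_carrier in auto)

interpretation G1_kernel: normal G1_kernel free_grp
  by (rule G1_kernel_normal)

lemma group_G1: "group G1"
  unfolding G1_eq by (rule G1_kernel.factorgroup_is_group)

lemma G1_quotient_hom: "(\<lambda>w. G1_kernel #>\<^bsub>free_grp\<^esub> w) \<in> hom free_grp G1"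
  unfolding G1_eq by (rule G1_kernel.r_coset_hom_Mod)

interpretation G1_quotient: group_hom free_grp G1 "\<lambda>w. G1_kernel #>\<^bsub>free_grp\<^esub> w"
  using G1_quotient_hom group_G1 by (simp add: group_hom_def group_hom_axioms_def)

lemma G1_kernel_subset_kernel:
  assumes H: "group H" and rel: "G1_relations H a b"
  shows "G1_kernel \<subseteq> kernel free_grp H (word_eval H (\<lambda>g. if g then a else b))"
proof -
  let ?f = "\<lambda>g. if g then a else b"
  interpret ev: group_hom free_grp H "word_eval H ?f"
    using H rel word_eval_hom[OF H, of ?f]
    by (simp add: group_hom_def group_hom_axioms_def G1_relations_def image_subset_iff)
  have ab: "word_eval H ?f gen_x = a" "word_eval H ?f gen_y = b"
    using rel by (simp_all add: gen_x_def gen_y_def letter_eval_def G1_relations_def)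
  have "word_eval H ?f r = \<one>\<^bsub>H\<^esub>" if "r \<in> G1_relators" for r
    using that rel unfolding G1_relators_eq G1_relations_def
    by (auto simp: ev.hom_commutator ev.hom_nat_pow ab)
  then show ?thesis unfolding G1_kernel_def
    using G1_relators_carrier
    by (intro FG.generate_subgroup_incl[OF _ ev.subgroup_kernel]) (auto simp: kernel_def ev.H.r_inv)
qed

lemma G1_lift:
  assumes H: "group H" and rel: "G1_relations H a b"
  obtains \<psi> where "\<psi> \<in> hom G1 H" "\<psi> G1_x = a" "\<psi> G1_y = b"
proof -
  let ?ev = "word_eval H (\<lambda>g. if g then a else b)"
  have a: "a \<in> carrier H" and b: "b \<in> carrier H" using rel by (simp_all add: G1_relations_def)
  interpret ev: group_hom free_grp H ?ev
    using H a b word_eval_hom[OF H, of "\<lambda>g. if g then a else b"]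
    by (simp add: group_hom_def group_hom_axioms_def image_subset_iff)
  have eq: "?ev u = ?ev v"
    if "u \<in> carrier free_grp" "v \<in> carrier free_grp"
      "G1_kernel #>\<^bsub>free_grp\<^esub> u = G1_kernel #>\<^bsub>free_grp\<^esub> v" for u v
  proof -
    have "u \<in> G1_kernel #>\<^bsub>free_grp\<^esub> v"
      using FG.rcos_self[OF that(1) G1_kernel.subgroup_axioms] that(3) by simp
    then have "u \<otimes>\<^bsub>free_grp\<^esub> inv\<^bsub>free_grp\<^esub> v \<in> G1_kernel"
      using that by (intro G1_kernel.rcos_module_imp[OF group_free_grp])
    then have "?ev u \<otimes>\<^bsub>H\<^esub> inv\<^bsub>H\<^esub> ?ev v = \<one>\<^bsub>H\<^esub>"
      using G1_kernel_subset_kernel[OF H rel] that by (auto simp: kernel_def)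
    then show ?thesis
      using that by (simp add: ev.H.inv_solve_right')
  qed
  obtain \<psi> where "\<psi> \<in> hom (free_grp Mod G1_kernel) H"
    and \<psi>: "\<And>w. w \<in> carrier free_grp \<Longrightarrow> \<psi> (G1_kernel #>\<^bsub>free_grp\<^esub> w) = ?ev w"
    using FactGroup_universal[OF ev.homh G1_kernel_normal eq] by blast
  moreover have "\<psi> G1_x = a" "\<psi> G1_y = b"
    using \<psi>[OF gen_xy_carrier(1)] \<psi>[OF gen_xy_carrier(2)] a b
    by (simp_all add: G1_x_def G1_y_def gen_x_def gen_y_def letter_eval_def)
  ultimately show thesis using that[of \<psi>] by (simp add: G1_eq)
qed

lemma G1_relators_subset_G1_kernel: "G1_relators \<subseteq> G1_kernel"
proof
  fix r assume r: "r \<in> G1_relators"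
  then have "r = \<one>\<^bsub>free_grp\<^esub> \<otimes>\<^bsub>free_grp\<^esub> r \<otimes>\<^bsub>free_grp\<^esub> inv\<^bsub>free_grp\<^esub> \<one>\<^bsub>free_grp\<^esub>"
    using G1_relators_carrier by auto
  then have "r \<in> (\<Union>g\<in>carrier free_grp.
      (\<lambda>r. g \<otimes>\<^bsub>free_grp\<^esub> r \<otimes>\<^bsub>free_grp\<^esub> inv\<^bsub>free_grp\<^esub> g) ` G1_relators)"
    using r FG.one_closed by blast
  then show "r \<in> G1_kernel" unfolding G1_kernel_def by (rule generate.incl)
qed

lemma G1_relations_G1: "G1_relations G1 G1_x G1_y"
proof -
  let ?q = "\<lambda>w. G1_kernel #>\<^bsub>free_grp\<^esub> w"
  have "?q r = \<one>\<^bsub>G1\<^esub>" if "r \<in> G1_relators" for r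
    using that G1_relators_subset_G1_kernel by (auto simp: G1_eq G1_kernel.rcos_const)
  then have "?q (gen_x [^]\<^bsub>free_grp\<^esub> (4::nat)) = \<one>\<^bsub>G1\<^esub>" "?q (gen_y [^]\<^bsub>free_grp\<^esub> (2::nat)) = \<one>\<^bsub>G1\<^esub>"
    "?q (commutator free_grp gen_x gen_y [^]\<^bsub>free_grp\<^esub> (2::nat)) = \<one>\<^bsub>G1\<^esub>"
    "?q (commutator free_grp (commutator free_grp gen_x gen_y) gen_x [^]\<^bsub>free_grp\<^esub> (2::nat)) = \<one>\<^bsub>G1\<^esub>"
    "?q (commutator free_grp (commutator free_grp (commutator free_grp gen_x gen_y) gen_x) gen_x) = \<one>\<^bsub>G1\<^esub>"
    "?q (commutator free_grp (commutator free_grp (commutator free_grp gen_x gen_y) gen_x) gen_y) = \<one>\<^bsub>G1\<^esub>"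
    unfolding G1_relators_eq by blast+
  then show ?thesis
    unfolding G1_relations_def G1_x_def G1_y_def
    by (simp add: G1_quotient.hom_commutator G1_quotient.hom_nat_pow)
qed

lemma G1_generated: "carrier G1 = generate G1 {G1_x, G1_y}"
proof -
  have "carrier G1 = (\<lambda>w. G1_kernel #>\<^bsub>free_grp\<^esub> w) ` carrier free_grp"
    by (simp add: G1_eq carrier_FactGroup)
  also have "\<dots> = (\<lambda>w. G1_kernel #>\<^bsub>free_grp\<^esub> w) ` generate free_grp (range (\<lambda>g. [(g, False)]))"
    by (simp only: flip: free_grp_generated)
  also have "\<dots> = generate G1 ((\<lambda>w. G1_kernel #>\<^bsub>free_grp\<^esub> w) ` range (\<lambda>g. [(g, False)]))"
    by (rule G1_quotient.generate_img[symmetric]) (auto simp: carrier_free_grp)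
  also have "range (\<lambda>g. [(g, False)]) = {gen_x, gen_y}"
    using UNIV_bool by (auto simp: gen_x_def gen_y_def)
  finally show ?thesis by (simp add: G1_x_def G1_y_def)
qed

lemma (in group) nat_pow_2_eq_oneD:
  assumes "x \<in> carrier G" "x [^] (2::nat) = \<one>"
  shows "x \<otimes> x = \<one>" "inv x = x"
proof -
  show xx: "x \<otimes> x = \<one>" using assms by (simp add: numeral_eq_Suc)
  show "inv x = x" using xx assms(1) by (simp add: inv_equality)
qed

locale G1_relations_group = group G for G (structure) +
  fixes a b
  assumes relations: "G1_relations G a b"
begin

abbreviation (input) c where "c \<equiv> commutator G a b"
abbreviation (input) d where "d \<equiv> commutator G c a"

lemma G1_elements_closed [simp]: "a \<in> carrier G" "b \<in> carrier G" "c \<in> carrier G" "d \<in> carrier G"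
  using relations by (simp_all add: G1_relations_def)

lemma G1_relations_expanded:
  "a \<otimes> (a \<otimes> (a \<otimes> a)) = \<one>" "b \<otimes> b = \<one>" "c \<otimes> c = \<one>" "d \<otimes> d = \<one>"
  "inv b = b" "inv c = c" "inv d = d" "d \<otimes> a = a \<otimes> d" "d \<otimes> b = b \<otimes> d"
  using relations nat_pow_2_eq_oneD[of b] nat_pow_2_eq_oneD[of c] nat_pow_2_eq_oneD[of d]
  by (simp_all add: G1_relations_def numeral_eq_Suc m_assoc commutator_eq_one_iff)

lemma G1_commutator_eq: "c = b \<otimes> inv a \<otimes> b \<otimes> a"
proof -
  have "c = inv c" using G1_relations_expanded(6) by simp
  also have "\<dots> = b \<otimes> inv a \<otimes> b \<otimes> a"
    by (simp add: commutator_def inv_mult_group G1_relations_expanded(5) m_assoc)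
  finally show ?thesis .
qed

lemma G1_commute_b_a: "b \<otimes> a = a \<otimes> (b \<otimes> c)"
proof -
  have "a \<otimes> (b \<otimes> c) = a \<otimes> (b \<otimes> (b \<otimes> inv a \<otimes> b \<otimes> a))"
    by (subst G1_commutator_eq) simp
  also have "\<dots> = b \<otimes> a"
    using G1_relations_expanded(2) by (simp add: m_assoc[symmetric] r_inv)
  finally show ?thesis by simp
qed

lemma G1_commute_c_a: "c \<otimes> a = a \<otimes> (c \<otimes> d)"
  by (simp add: commutator_def m_assoc[symmetric] r_inv)

lemma G1_commute_c_b: "c \<otimes> b = b \<otimes> c"
proof -
  have "b \<otimes> c = inv a \<otimes> b \<otimes> a"
    using G1_relations_expanded(2) by (subst G1_commutator_eq) (simp add: m_assoc[symmetric])
  moreover have "c \<otimes> b = inv a \<otimes> b \<otimes> a"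
    using G1_relations_expanded(2,5) by (simp add: commutator_def m_assoc)
  ultimately show ?thesis by simp
qed

definition G1_normal_form :: "nat \<Rightarrow> nat \<Rightarrow> nat \<Rightarrow> nat \<Rightarrow> 'a" where
  "G1_normal_form i j k l = a [^] i \<otimes> (b [^] j \<otimes> (c [^] k \<otimes> d [^] l))"

lemma G1_normal_form_closed [simp]: "G1_normal_form i j k l \<in> carrier G"
  by (simp add: G1_normal_form_def)

lemma G1_normal_form_mult_a:
  assumes "i < 4" "j < 2" "k < 2" "l < 2"
  shows "G1_normal_form i j k l \<otimes> a =
    G1_normal_form ((i + 1) mod 4) j ((j + k) mod 2) ((k + l) mod 2)"
proof -
  have da: "d [^] l \<otimes> a = a \<otimes> d [^] l"
    using assms G1_relations_expanded(8) by (auto dest!: less_2_cases)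
  have ca: "c [^] k \<otimes> a = a \<otimes> (c [^] k \<otimes> d [^] k)"
    using assms G1_commute_c_a by (auto dest!: less_2_cases)
  have ba: "b [^] j \<otimes> a = a \<otimes> (b [^] j \<otimes> c [^] j)"
    using assms G1_commute_b_a by (auto dest!: less_2_cases)
  have aa: "a [^] i \<otimes> a = a [^] ((i + 1) mod 4)"
  proof (cases "i = 3")
    case True
    then show ?thesis using G1_relations_expanded(1) by (simp add: numeral_eq_Suc m_assoc)
  next
    case False
    then have "(i + 1) mod 4 = Suc i" using assms by simp
    then show ?thesis by simp
  qed
  have cc: "c [^] j \<otimes> c [^] k = c [^] ((j + k) mod 2)"
    using assms G1_relations_expanded(3) by (auto dest!: less_2_cases)
  have dd: "d [^] k \<otimes> d [^] l = d [^] ((k + l) mod 2)"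
    using assms G1_relations_expanded(4) by (auto dest!: less_2_cases)
  have "G1_normal_form i j k l \<otimes> a = a [^] i \<otimes> (b [^] j \<otimes> ((c [^] k \<otimes> a) \<otimes> d [^] l))"
    by (simp add: G1_normal_form_def m_assoc da)
  also have "\<dots> = a [^] i \<otimes> ((b [^] j \<otimes> a) \<otimes> (c [^] k \<otimes> (d [^] k \<otimes> d [^] l)))"
    by (simp add: ca m_assoc)
  also have "\<dots> = (a [^] i \<otimes> a) \<otimes> (b [^] j \<otimes> ((c [^] j \<otimes> c [^] k) \<otimes> (d [^] k \<otimes> d [^] l)))"
    by (simp add: ba m_assoc)
  also have "\<dots> = G1_normal_form ((i + 1) mod 4) j ((j + k) mod 2) ((k + l) mod 2)"
    by (simp add: aa cc dd G1_normal_form_def)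
  finally show ?thesis .
qed

lemma G1_normal_form_mult_b:
  assumes "j < 2" "k < 2" "l < 2"
  shows "G1_normal_form i j k l \<otimes> b = G1_normal_form i ((j + 1) mod 2) k l"
proof -
  have db: "d [^] l \<otimes> b = b \<otimes> d [^] l"
    using assms G1_relations_expanded(9) by (auto dest!: less_2_cases)
  have cb: "c [^] k \<otimes> b = b \<otimes> c [^] k"
    using assms G1_commute_c_b by (auto dest!: less_2_cases)
  have bb: "b [^] j \<otimes> b = b [^] ((j + 1) mod 2)"
    using assms G1_relations_expanded(2) by (auto dest!: less_2_cases)
  have "G1_normal_form i j k l \<otimes> b = a [^] i \<otimes> (b [^] j \<otimes> ((c [^] k \<otimes> b) \<otimes> d [^] l))"
    by (simp add: G1_normal_form_def m_assoc db)
  also have "\<dots> = a [^] i \<otimes> ((b [^] j \<otimes> b) \<otimes> (c [^] k \<otimes> d [^] l))"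
    by (simp add: cb m_assoc)
  finally show ?thesis by (simp add: bb G1_normal_form_def)
qed

definition G1_normal_forms :: "'a set" where
  "G1_normal_forms = (\<lambda>(i, j, k, l). G1_normal_form i j k l) ` ({..<4} \<times> {..<2} \<times> {..<2} \<times> {..<2})"

lemma G1_normal_form_in:
  "i < 4 \<Longrightarrow> j < 2 \<Longrightarrow> k < 2 \<Longrightarrow> l < 2 \<Longrightarrow> G1_normal_form i j k l \<in> G1_normal_forms"
  unfolding G1_normal_forms_def by (rule image_eqI[where x = "(i, j, k, l)"]) auto

lemma G1_normal_formsE:
  assumes "x \<in> G1_normal_forms"
  obtains i j k l where "i < 4" "j < 2" "k < 2" "l < 2" "x = G1_normal_form i j k l"
  using assms unfolding G1_normal_forms_def by auto

lemma G1_normal_forms_mult_generator: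
  assumes "x \<in> G1_normal_forms"
  shows "x \<otimes> a \<in> G1_normal_forms" "x \<otimes> b \<in> G1_normal_forms"
  using assms by (auto elim!: G1_normal_formsE
      simp: G1_normal_form_mult_a G1_normal_form_mult_b G1_normal_form_in)

lemma G1_normal_forms_mult_closed:
  assumes "x \<in> G1_normal_forms" "g \<in> generate G {a, b}"
  shows "x \<otimes> g \<in> G1_normal_forms"
  using assms(2,1)
proof (induction arbitrary: x rule: generate.induct)
  case one
  then show ?case by (auto elim!: G1_normal_formsE simp: G1_normal_form_in)
next
  case (incl h)
  then show ?case using G1_normal_forms_mult_generator by auto
next
  case (inv h)
  have "inv a = a \<otimes> (a \<otimes> a)"
    using G1_relations_expanded(1) by (intro inv_equality) (simp_all add: m_assoc)
  then have "x \<otimes> inv a = x \<otimes> a \<otimes> a \<otimes> a" if "x \<in> G1_normal_forms" for x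
    using that by (auto elim!: G1_normal_formsE simp: m_assoc G1_normal_form_def)
  then show ?case
    using inv G1_normal_forms_mult_generator by (auto simp: G1_relations_expanded(5))
next
  case (eng h1 h2)
  have "h1 \<in> carrier G" "h2 \<in> carrier G" "x \<in> carrier G"
    using eng generate_incl[of "{a, b}"]
    by (auto elim: G1_normal_formsE simp: G1_normal_form_def)
  then show ?case using eng.IH eng.prems by (simp add: m_assoc[symmetric])
qed

lemma finite_generate_G1_relations: "finite (generate G {a, b})"
proof (rule finite_subset)
  show "generate G {a, b} \<subseteq> G1_normal_forms"
  proof
    fix g assume "g \<in> generate G {a, b}"
    moreover have "\<one> \<in> G1_normal_forms"
      using G1_normal_form_in[of 0 0 0 0] by (simp add: G1_normal_form_def)
    ultimately show "g \<in> G1_normal_forms"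
      using G1_normal_forms_mult_closed generate_incl[of "{a, b}"] by force
  qed
qed (simp add: G1_normal_forms_def)

end

lemma finite_G1: "finite (carrier G1)"
proof -
  interpret G1_relations_group G1 G1_x G1_y
    by (rule G1_relations_group.intro[OF group_G1]) (unfold_locales, rule G1_relations_G1)
  show ?thesis using finite_generate_G1_relations G1_generated by simp
qed

section \<open>A quotient of \<open>G\<^sub>1\<close> of order 16\<close>

text \<open>\<open>Q16\<close> lives on \<open>\<int>/4 \<times> \<int>/4\<close>; the generators of \<open>G\<^sub>1\<close> map to \<open>x \<mapsto> (0, 1)\<close> and
  \<open>y \<mapsto> (1, 0)\<close>, and \<open>[[x, y], x]\<close> becomes trivial. The second coordinate is the quotient
  \<open>G\<^sub>1 \<rightarrow> \<int>/4\<close> with \<open>x \<mapsto> 1\<close>, \<open>y \<mapsto> 0\<close>.\<close>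

definition Q16 :: "(int \<times> int) monoid" where
  "Q16 = \<lparr>carrier = {0..<4} \<times> {0..<4},
     monoid.mult = (\<lambda>(k, m) (k', m'). ((k + (if even (k + m) then k' else - k')) mod 4, (m + m') mod 4)),
     one = (0, 0)\<rparr>"

lemma Q16_mult: "(k, m) \<otimes>\<^bsub>Q16\<^esub> (k', m') =
    ((k + (if even (k + m) then k' else - k')) mod 4, (m + m') mod 4)"
  by (simp add: Q16_def)

lemma Q16_one: "\<one>\<^bsub>Q16\<^esub> = (0, 0)"
  by (simp add: Q16_def)

lemma carrier_Q16: "carrier Q16 = {0..<4} \<times> {0..<4}"
  by (simp add: Q16_def)

lemma even_mod_4_iff: "even ((x::int) mod 4) \<longleftrightarrow> even x"
  by presburger

lemma group_Q16: "group Q16"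
proof (rule groupI)
  fix p q r assume "p \<in> carrier Q16" "q \<in> carrier Q16" "r \<in> carrier Q16"
  obtain k m k' m' k'' m'' where pqr: "p = (k, m)" "q = (k', m')" "r = (k'', m'')"
    by (cases p, cases q, cases r)
  show "p \<otimes>\<^bsub>Q16\<^esub> q \<otimes>\<^bsub>Q16\<^esub> r = p \<otimes>\<^bsub>Q16\<^esub> (q \<otimes>\<^bsub>Q16\<^esub> r)"
    unfolding pqr Q16_mult
    by (cases "even (k + m)"; cases "even (k' + m')";
        simp add: even_mod_4_iff mod_add_left_eq mod_add_right_eq mod_diff_right_eq mod_diff_left_eq
          algebra_simps; presburger)
next
  fix p assume "p \<in> carrier Q16"
  then obtain k m where p: "p = (k, m)" "0 \<le> k" "k < 4" "0 \<le> m" "m < 4"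
    by (auto simp: carrier_Q16)
  show "\<exists>q\<in>carrier Q16. q \<otimes>\<^bsub>Q16\<^esub> p = \<one>\<^bsub>Q16\<^esub>"
    by (rule bexI[of _ "((if even (k + m) then - k else k) mod 4, (- m) mod 4)"])
       (use p in \<open>auto simp: Q16_mult Q16_one carrier_Q16 even_mod_4_iff mod_add_left_eq\<close>)
qed (auto simp: Q16_def)

interpretation Q16: group Q16 by (rule group_Q16)

lemma Q16_inv: "(k, m) \<in> carrier Q16 \<Longrightarrow>
    inv\<^bsub>Q16\<^esub> (k, m) = ((if even (k + m) then - k else k) mod 4, (- m) mod 4)"
  by (rule Q16.inv_equality) (auto simp: Q16_mult Q16_one carrier_Q16 even_mod_4_iff mod_add_left_eq)

definition Q16_x :: "int \<times> int" where "Q16_x = (0, 1)"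
definition Q16_y :: "int \<times> int" where "Q16_y = (1, 0)"

lemma G1_relations_Q16: "G1_relations Q16 Q16_x Q16_y"
  unfolding G1_relations_def commutator_def Q16_x_def Q16_y_def
  by (simp add: carrier_Q16 Q16_mult Q16_inv Q16_one numeral_eq_Suc)

lemma snd_Q16_mult: "snd (p \<otimes>\<^bsub>Q16\<^esub> q) = (snd p + snd q) mod 4"
  by (cases p, cases q) (simp add: Q16_mult)

lemma snd_Q16_inv: "p \<in> carrier Q16 \<Longrightarrow> snd (inv\<^bsub>Q16\<^esub> p) = (- snd p) mod 4"
  by (cases p) (simp add: Q16_inv)

lemma Q16_coordinates:
  assumes "p \<in> carrier Q16"
  shows "fst p = 0 \<or> fst p = 1 \<or> fst p = 2 \<or> fst p = 3" "snd p = 0 \<or> snd p = 1 \<or> snd p = 2 \<or> snd p = 3"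
  using assms by (auto simp: carrier_Q16)

definition chi_x :: "int \<times> int \<Rightarrow> 'a::ring_1" where
  "chi_x q = (if even (snd q) then 1 else - 1)"

definition chi_y :: "int \<times> int \<Rightarrow> 'a::ring_1" where
  "chi_y q = (if even (fst q) then 1 else - 1)"

text \<open>Characters of the index-2 subgroup \<open>{q. even (snd q)}\<close>, the image of
  \<open>\<langle>x\<^sup>2, y, x y x\<^sup>-\<^sup>1\<rangle>\<close>; their values elsewhere are irrelevant.\<close>

definition chi_xx :: "int \<times> int \<Rightarrow> 'a::ring_1" where
  "chi_xx q = (if snd q = 0 then 1 else - 1)"

definition chi_xyx :: "int \<times> int \<Rightarrow> 'a::ring_1" where
  "chi_xyx q = (if fst q < 2 then 1 else - 1)"

definition extend_by_zero :: "(int \<times> int \<Rightarrow> 'a) \<Rightarrow> int \<times> int \<Rightarrow> 'a::zero" where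
  "extend_by_zero \<chi> q = (if even (snd q) then \<chi> q else 0)"

lemma chi_x_mult: "chi_x (p \<otimes>\<^bsub>Q16\<^esub> q) = chi_x p * chi_x q"
  by (simp add: chi_x_def snd_Q16_mult even_mod_4_iff)

lemma chi_y_mult: "chi_y (p \<otimes>\<^bsub>Q16\<^esub> q) = chi_y p * chi_y q"
  by (cases p, cases q) (simp add: chi_y_def Q16_mult even_mod_4_iff)

lemma chi_x_inv_mult: "p \<in> carrier Q16 \<Longrightarrow> chi_x (inv\<^bsub>Q16\<^esub> p \<otimes>\<^bsub>Q16\<^esub> q) = chi_x p * chi_x q"
  by (simp add: chi_x_mult) (simp add: chi_x_def snd_Q16_inv even_mod_4_iff)

lemma chi_y_inv_mult: "p \<in> carrier Q16 \<Longrightarrow> chi_y (inv\<^bsub>Q16\<^esub> p \<otimes>\<^bsub>Q16\<^esub> q) = chi_y p * chi_y q"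
  by (simp add: chi_y_mult) (cases p, simp add: chi_y_def Q16_inv even_mod_4_iff)

lemma snd_Q16_inv_mult:
  "p \<in> carrier Q16 \<Longrightarrow> snd (inv\<^bsub>Q16\<^esub> p \<otimes>\<^bsub>Q16\<^esub> q) = (snd q - snd p) mod 4"
  by (simp add: snd_Q16_mult snd_Q16_inv mod_add_left_eq)

lemma snd_Q16_conj:
  "p \<in> carrier Q16 \<Longrightarrow> q \<in> carrier Q16 \<Longrightarrow> snd (inv\<^bsub>Q16\<^esub> p \<otimes>\<^bsub>Q16\<^esub> q \<otimes>\<^bsub>Q16\<^esub> p) = snd q"
  by (simp add: snd_Q16_mult snd_Q16_inv mod_add_left_eq carrier_Q16 mem_Times_iff)

lemma Q16_x_conj:
  assumes "q \<in> carrier Q16" "even (fst q)" "even (snd q)"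
  shows "inv\<^bsub>Q16\<^esub> Q16_x \<otimes>\<^bsub>Q16\<^esub> q \<otimes>\<^bsub>Q16\<^esub> Q16_x = q"
  using Q16_coordinates[OF assms(1)] assms(2,3)
  by (cases q) (auto simp: Q16_x_def Q16_inv Q16_mult carrier_Q16)

lemma Q16_y_shift:
  assumes "q \<in> carrier Q16" "odd (fst q)" "even (snd q)"
  shows "even (fst (inv\<^bsub>Q16\<^esub> Q16_y \<otimes>\<^bsub>Q16\<^esub> q))" "even (snd (inv\<^bsub>Q16\<^esub> Q16_y \<otimes>\<^bsub>Q16\<^esub> q))"
  using Q16_coordinates[OF assms(1)] assms(2,3)
  by (cases q, auto simp: Q16_y_def Q16_inv Q16_mult carrier_Q16)+

lemma fst_Q16_inv_mult:
  assumes "p \<in> carrier Q16" "even (snd p)"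
  shows "fst (inv\<^bsub>Q16\<^esub> p \<otimes>\<^bsub>Q16\<^esub> q) = (if even (fst p) then fst q - fst p else fst p - fst q) mod 4"
proof -
  obtain k m where p: "p = (k, m)" by (cases p)
  have "even ((- m) mod 4)" using assms(2) by (simp add: p even_mod_4_iff)
  then show ?thesis
    using assms by (cases q) (auto simp: p Q16_inv Q16_mult even_mod_4_iff mod_add_left_eq mod_diff_right_eq)
qed

lemma chi_xx_inv_mult:
  assumes "p \<in> carrier Q16" "q \<in> carrier Q16" "even (snd p)"
  shows "extend_by_zero chi_xx (inv\<^bsub>Q16\<^esub> p \<otimes>\<^bsub>Q16\<^esub> q) = chi_xx p * extend_by_zero chi_xx q"
proof -
  have "snd p = 0 \<or> snd p = 2" "snd q = 0 \<or> snd q = 1 \<or> snd q = 2 \<or> snd q = 3"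
    using Q16_coordinates[OF assms(1)] Q16_coordinates[OF assms(2)] assms(3) by auto
  then show ?thesis
    by (elim disjE) (simp_all add: extend_by_zero_def chi_xx_def snd_Q16_inv_mult assms(1))
qed

lemma chi_xyx_inv_mult:
  assumes "p \<in> carrier Q16" "q \<in> carrier Q16" "even (snd p)"
  shows "extend_by_zero chi_xyx (inv\<^bsub>Q16\<^esub> p \<otimes>\<^bsub>Q16\<^esub> q) = chi_xyx p * extend_by_zero chi_xyx q"
proof -
  have "fst p = 0 \<or> fst p = 1 \<or> fst p = 2 \<or> fst p = 3" "fst q = 0 \<or> fst q = 1 \<or> fst q = 2 \<or> fst q = 3"
    using Q16_coordinates[OF assms(1)] Q16_coordinates[OF assms(2)] by auto
  then show ?thesis
    using assms(3) by (elim disjE) (simp_all add: extend_by_zero_def chi_xyx_def snd_Q16_inv_mult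
        fst_Q16_inv_mult assms(1) even_mod_4_iff)
qed

section \<open>Subfields and their automorphisms\<close>

lemma is_subfieldD:
  assumes "is_subfield K"
  shows "0 \<in> K" "1 \<in> K" "x \<in> K \<Longrightarrow> y \<in> K \<Longrightarrow> x + y \<in> K" "x \<in> K \<Longrightarrow> y \<in> K \<Longrightarrow> x - y \<in> K"
    "x \<in> K \<Longrightarrow> y \<in> K \<Longrightarrow> x * y \<in> K" "x \<in> K \<Longrightarrow> inverse x \<in> K"
    "x \<in> K \<Longrightarrow> - x \<in> K" "x \<in> K \<Longrightarrow> y \<in> K \<Longrightarrow> x / y \<in> K" "x \<in> K \<Longrightarrow> x ^ n \<in> K"
proof -
  note K = assms[unfolded is_subfield_def]
  show 0: "0 \<in> K" "1 \<in> K" using K by auto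
  show "x \<in> K \<Longrightarrow> y \<in> K \<Longrightarrow> x + y \<in> K" "x \<in> K \<Longrightarrow> y \<in> K \<Longrightarrow> x - y \<in> K"
    "x \<in> K \<Longrightarrow> y \<in> K \<Longrightarrow> x * y \<in> K" using K by auto
  show inv: "x \<in> K \<Longrightarrow> inverse x \<in> K" for x using K by (cases "x = 0") auto
  show "x \<in> K \<Longrightarrow> - x \<in> K" using K 0 by (metis diff_0)
  show "x \<in> K \<Longrightarrow> y \<in> K \<Longrightarrow> x / y \<in> K" using K inv by (simp add: divide_inverse)
  show "x \<in> K \<Longrightarrow> x ^ n \<in> K" using K 0 by (induction n) auto
qed

lemma is_subfield_UNIV: "is_subfield UNIV"
  by (simp add: is_subfield_def)

lemma is_subfield_Inter: "(\<And>S. S \<in> A \<Longrightarrow> is_subfield S) \<Longrightarrow> is_subfield (\<Inter>A)"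
  unfolding is_subfield_def by blast

lemma is_subfield_adjoin: "is_subfield (adjoin F r)"
  unfolding adjoin_def by (rule is_subfield_Inter) simp

lemma adjoin_least: "is_subfield S \<Longrightarrow> F \<subseteq> S \<Longrightarrow> r \<in> S \<Longrightarrow> adjoin F r \<subseteq> S"
  unfolding adjoin_def by (rule Inter_lower) simp

lemma subset_adjoin: "F \<subseteq> adjoin F r" and mem_adjoin: "r \<in> adjoin F r"
  unfolding adjoin_def by blast+

lemma adjoin_subset_adjoin:
  assumes "r \<noteq> 0" "r * r \<in> F" "r * s \<in> F"
  shows "adjoin F s \<subseteq> adjoin F r"
proof (rule adjoin_least[OF is_subfield_adjoin subset_adjoin])
  note closed = is_subfieldD[OF is_subfield_adjoin[of F r]]
  have "r * s \<in> adjoin F r" "r * r \<in> adjoin F r" using assms subset_adjoin by blast+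
  then have "(r * s) / (r * r) * r \<in> adjoin F r" using closed(5,8) mem_adjoin by blast
  moreover have "(r * s) / (r * r) * r = s" using assms(1) by (simp add: field_simps)
  ultimately show "s \<in> adjoin F r" by simp
qed

context
  fixes F K :: "'l::field set" and \<sigma>
  assumes K: "is_subfield K" and \<sigma>: "\<sigma> \<in> gal_auts F K"
begin

lemma gal_autsD:
  "x \<in> K \<Longrightarrow> y \<in> K \<Longrightarrow> \<sigma> (x + y) = \<sigma> x + \<sigma> y"
  "x \<in> K \<Longrightarrow> y \<in> K \<Longrightarrow> \<sigma> (x * y) = \<sigma> x * \<sigma> y"
  "\<sigma> 1 = 1" "x \<in> F \<Longrightarrow> \<sigma> x = x" "x \<notin> K \<Longrightarrow> \<sigma> x = x" "bij_betw \<sigma> K K"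
  using \<sigma> by (auto simp: gal_auts_def)

lemma gal_aut_closed: "x \<in> K \<Longrightarrow> \<sigma> x \<in> K"
  using gal_autsD(6) by (auto simp: bij_betw_def)

lemma gal_aut_eq_iff: "x \<in> K \<Longrightarrow> y \<in> K \<Longrightarrow> \<sigma> x = \<sigma> y \<longleftrightarrow> x = y"
  using gal_autsD(6) by (auto simp: bij_betw_def inj_on_def)

lemma gal_aut_zero: "\<sigma> 0 = 0"
proof -
  have "\<sigma> 0 + \<sigma> 0 = \<sigma> 0 + 0" using gal_autsD(1)[of 0 0] is_subfieldD(1)[OF K] by simp
  then show ?thesis by (metis add_left_cancel)
qed

lemma gal_aut_uminus: "x \<in> K \<Longrightarrow> \<sigma> (- x) = - \<sigma> x"
  using gal_autsD(1)[of x "- x"] gal_aut_zero is_subfieldD(7)[OF K] by (simp add: add_eq_0_iff)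

lemma gal_aut_diff: "x \<in> K \<Longrightarrow> y \<in> K \<Longrightarrow> \<sigma> (x - y) = \<sigma> x - \<sigma> y"
  using gal_autsD(1)[of x "- y"] gal_aut_uminus is_subfieldD(7)[OF K] by simp

lemma gal_aut_inverse: "x \<in> K \<Longrightarrow> \<sigma> (inverse x) = inverse (\<sigma> x)"
proof (cases "x = 0")
  case False
  assume x: "x \<in> K"
  have "\<sigma> x * \<sigma> (inverse x) = 1"
    using gal_autsD(2)[OF x is_subfieldD(6)[OF K x]] False gal_autsD(3) by simp
  then show ?thesis by (metis inverse_unique)
qed (simp add: gal_aut_zero)

lemma gal_aut_divide: "x \<in> K \<Longrightarrow> y \<in> K \<Longrightarrow> \<sigma> (x / y) = \<sigma> x / \<sigma> y"
  using gal_autsD(2)[of x "inverse y"] gal_aut_inverse is_subfieldD(6)[OF K] by (simp add: divide_inverse)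

lemma gal_aut_power: "x \<in> K \<Longrightarrow> \<sigma> (x ^ n) = \<sigma> x ^ n"
  by (induction n) (simp_all add: gal_autsD(2,3) is_subfieldD(9)[OF K])

end

lemma gal_group_carrier: "carrier (gal_group F K) = gal_auts F K"
  and gal_group_mult: "\<sigma> \<otimes>\<^bsub>gal_group F K\<^esub> \<tau> = \<sigma> \<circ> \<tau>"
  and gal_group_one: "\<one>\<^bsub>gal_group F K\<^esub> = id"
  by (simp_all add: gal_group_def)

lemma gal_auts_comp:
  assumes K: "is_subfield K" and \<sigma>: "\<sigma> \<in> gal_auts F K" and \<tau>: "\<tau> \<in> gal_auts F K"
  shows "\<sigma> \<circ> \<tau> \<in> gal_auts F K"
  using bij_betw_trans[OF gal_autsD(6)[OF K \<tau>] gal_autsD(6)[OF K \<sigma>]]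
    gal_autsD[OF K \<sigma>] gal_autsD[OF K \<tau>] gal_aut_closed[OF K \<tau>]
  by (simp add: gal_auts_def is_subfieldD[OF K])

lemma gal_auts_inv:
  assumes K: "is_subfield K" and FK: "F \<subseteq> K" and \<sigma>: "\<sigma> \<in> gal_auts F K"
  obtains \<tau> where "\<tau> \<in> gal_auts F K" "\<tau> \<circ> \<sigma> = id"
proof -
  define \<tau> where "\<tau> z = (if z \<in> K then inv_into K \<sigma> z else z)" for z
  note bij = gal_autsD(6)[OF K \<sigma>]
  have \<tau>\<sigma>: "\<tau> (\<sigma> z) = z" if "z \<in> K" for z
    using that bij gal_aut_closed[OF K \<sigma>] by (simp add: \<tau>_def bij_betw_inv_into_left)
  have \<sigma>\<tau>: "\<sigma> (\<tau> z) = z" if "z \<in> K" for z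
    using that bij by (simp add: \<tau>_def bij_betw_inv_into_right)
  have \<tau>_bij: "bij_betw \<tau> K K"
    using bij_betw_inv_into[OF bij] by (rule bij_betw_cong[THEN iffD1, rotated]) (simp add: \<tau>_def)
  then have \<tau>K: "\<tau> z \<in> K" if "z \<in> K" for z
    using that by (auto simp: bij_betw_def)
  have "\<tau> (u + v) = \<tau> u + \<tau> v" if "u \<in> K" "v \<in> K" for u v
  proof -
    have "\<sigma> (\<tau> u + \<tau> v) = u + v" using gal_autsD(1)[OF K \<sigma>] \<tau>K \<sigma>\<tau> that by simp
    then show ?thesis using \<tau>\<sigma> \<tau>K that is_subfieldD(3)[OF K] by metis
  qed
  moreover have "\<tau> (u * v) = \<tau> u * \<tau> v" if "u \<in> K" "v \<in> K" for u v
  proof -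
    have "\<sigma> (\<tau> u * \<tau> v) = u * v" using gal_autsD(2)[OF K \<sigma>] \<tau>K \<sigma>\<tau> that by simp
    then show ?thesis using \<tau>\<sigma> \<tau>K that is_subfieldD(5)[OF K] by metis
  qed
  moreover have "\<tau> 1 = 1" using \<tau>\<sigma>[of 1] gal_autsD(3)[OF K \<sigma>] is_subfieldD(2)[OF K] by simp
  moreover have "\<tau> z = z" if "z \<in> F" for z using \<tau>\<sigma>[of z] gal_autsD(4)[OF K \<sigma>] that FK by auto
  moreover have \<tau>_out: "\<tau> z = z" if "z \<notin> K" for z using that by (simp add: \<tau>_def)
  moreover have "(\<tau> \<circ> \<sigma>) z = id z" for z
    by (cases "z \<in> K") (simp_all add: \<tau>\<sigma> \<tau>_out gal_autsD(5)[OF K \<sigma>])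
  ultimately show thesis using that[of \<tau>] \<tau>_bij by (auto simp: gal_auts_def fun_eq_iff)
qed

lemma group_gal_group:
  assumes "is_subfield K" "F \<subseteq> K"
  shows "group (gal_group F K)"
proof (rule groupI)
  fix \<sigma> assume "\<sigma> \<in> carrier (gal_group F K)"
  then obtain \<tau> where "\<tau> \<in> gal_auts F K" "\<tau> \<circ> \<sigma> = id"
    using gal_auts_inv[OF assms] by (auto simp: gal_group_carrier)
  then show "\<exists>\<tau>\<in>carrier (gal_group F K). \<tau> \<otimes>\<^bsub>gal_group F K\<^esub> \<sigma> = \<one>\<^bsub>gal_group F K\<^esub>"
    by (auto simp: gal_group_def)
qed (auto simp: gal_group_def gal_auts_comp[OF assms(1)] comp_assoc, simp add: gal_auts_def)

lemma dedekind_independence: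
  fixes S :: "('l::field \<Rightarrow> 'l) set"
  assumes "finite S" "\<forall>f\<in>S. \<forall>x y. f (x * y) = f x * f y" "\<forall>f\<in>S. f 1 = 1"
    and "\<forall>w. (\<Sum>f\<in>S. c f * f w) = 0"
  shows "\<forall>f\<in>S. c f = 0"
  using assms
proof (induction S arbitrary: c rule: finite_induct)
  case (insert h T)
  have sum: "c h * h w + (\<Sum>f\<in>T. c f * f w) = 0" for w
    using insert.prems(3) insert.hyps by (simp add: sum.insert)
  have "c g = 0" if g: "g \<in> T" for g
  proof -
    have "g \<noteq> h" using g insert.hyps by auto
    then obtain y where y: "g y \<noteq> h y" by auto
    have "(\<Sum>f\<in>T. c f * (f y - h y) * f w) = 0" for w
    proof -
      have "(\<Sum>f\<in>T. c f * f (y * w)) = (\<Sum>f\<in>T. c f * f y * f w)"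
        using insert.prems(1) by (intro sum.cong) auto
      then have "(\<Sum>f\<in>T. c f * (f y - h y) * f w) = (\<Sum>f\<in>T. c f * f (y * w)) - h y * (\<Sum>f\<in>T. c f * f w)"
        by (simp add: sum_subtractf sum_distrib_left algebra_simps)
      also have "\<dots> = - (c h * h (y * w)) + h y * (c h * h w)"
      proof -
        have "(\<Sum>f\<in>T. c f * f (y * w)) = - (c h * h (y * w))" "(\<Sum>f\<in>T. c f * f w) = - (c h * h w)"
          using sum[of "y * w"] sum[of w] by (simp_all add: add_eq_0_iff)
        then show ?thesis by simp
      qed
      also have "\<dots> = 0" using insert.prems(1) by (simp add: algebra_simps)
      finally show ?thesis .
    qed
    then have "c g * (g y - h y) = 0"
      using insert.IH[of "\<lambda>f. c f * (f y - h y)"] insert.prems(1,2) g by auto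
    then show ?thesis using y by simp
  qed
  moreover have "c h = 0" using sum[of 1] calculation insert.prems(2) by simp
  ultimately show ?case by auto
qed simp

definition restrict_aut :: "'l set \<Rightarrow> ('l \<Rightarrow> 'l) \<Rightarrow> 'l \<Rightarrow> 'l" where
  "restrict_aut E g z = (if z \<in> E then g z else z)"

section \<open>Cyclic quartic extensions\<close>

text \<open>An \<open>F\<close>-automorphism maps a root of \<open>(z - e\<^sub>0) (z - e\<^sub>1) (z - e\<^sub>2) (z - e\<^sub>3) \<in> F[z]\<close> to a root.\<close>

lemma gal_aut_root_of_quartic:
  assumes k: "k \<in> gal_auts F UNIV"
    and "e0 + e1 + e2 + e3 \<in> F" "e0 * e1 + e0 * e2 + e0 * e3 + e1 * e2 + e1 * e3 + e2 * e3 \<in> F"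
    and "e0 * e1 * e2 + e0 * e1 * e3 + e0 * e2 * e3 + e1 * e2 * e3 \<in> F" "e0 * e1 * e2 * e3 \<in> F"
  shows "k e0 = e0 \<or> k e0 = e1 \<or> k e0 = e2 \<or> k e0 = e3"
proof -
  define s1 where "s1 = e0 + e1 + e2 + e3"
  define s2 where "s2 = e0 * e1 + e0 * e2 + e0 * e3 + e1 * e2 + e1 * e3 + e2 * e3"
  define s3 where "s3 = e0 * e1 * e2 + e0 * e1 * e3 + e0 * e2 * e3 + e1 * e2 * e3"
  define s4 where "s4 = e0 * e1 * e2 * e3"
  have quartic: "(z - e0) * (z - e1) * (z - e2) * (z - e3) = z ^ 4 - s1 * z ^ 3 + s2 * z ^ 2 - s3 * z + s4" for z
    by (simp add: s1_def s2_def s3_def s4_def algebra_simps power2_eq_square power3_eq_cube power4_eq_xxxx)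
  note k_hom = gal_autsD[OF is_subfield_UNIV k] gal_aut_diff[OF is_subfield_UNIV k]
    gal_aut_power[OF is_subfield_UNIV k] gal_aut_zero[OF is_subfield_UNIV k]
  have "k (e0 ^ 4 - s1 * e0 ^ 3 + s2 * e0 ^ 2 - s3 * e0 + s4) = 0"
    using quartic[of e0] k_hom by simp
  then have "k e0 ^ 4 - s1 * k e0 ^ 3 + s2 * k e0 ^ 2 - s3 * k e0 + s4 = 0"
    using assms(2-5) k_hom by (simp add: s1_def [symmetric] s2_def [symmetric] s3_def [symmetric] s4_def [symmetric])
  then show ?thesis by (simp flip: quartic)
qed

locale C4_extension =
  fixes F E :: "'l::field set"
  assumes galois: "galois_ext F E" and cyclic: "gal_group F E \<cong> C4"
begin

lemma is_subfield_E: "is_subfield E" and F_subset_E: "F \<subseteq> E"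
  using galois by (simp_all add: galois_ext_def)

lemma exists_generator:
  obtains \<sigma> where "\<sigma> \<in> gal_auts F E" "\<sigma> \<circ> \<sigma> \<noteq> id" "\<sigma> \<circ> \<sigma> \<circ> \<sigma> \<circ> \<sigma> = id"
    "\<And>\<tau>. \<tau> \<in> gal_auts F E \<Longrightarrow> \<tau> = id \<or> \<tau> = \<sigma> \<or> \<tau> = \<sigma> \<circ> \<sigma> \<or> \<tau> = \<sigma> \<circ> \<sigma> \<circ> \<sigma>"
proof -
  interpret Gal_E: group "gal_group F E"
    by (rule group_gal_group[OF is_subfield_E F_subset_E])
  obtain h where h: "h \<in> iso (gal_group F E) C4" using cyclic by (auto simp: is_iso_def)
  then interpret h: group_hom "gal_group F E" C4 h
    by (simp add: group_hom_def group_hom_axioms_def iso_def Gal_E.is_group)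
  have bij: "bij_betw h (gal_auts F E) {0..<4}"
    using h by (simp add: iso_def gal_group_carrier carrier_integer_mod_group)
  then have h_inj: "\<tau> = \<tau>'" if "\<tau> \<in> gal_auts F E" "\<tau>' \<in> gal_auts F E" "h \<tau> = h \<tau>'" for \<tau> \<tau>'
    using that by (auto simp: bij_betw_def inj_on_def)
  have comp_closed: "\<tau> \<circ> \<tau>' \<in> gal_auts F E" if "\<tau> \<in> gal_auts F E" "\<tau>' \<in> gal_auts F E" for \<tau> \<tau>'
    using that gal_auts_comp[OF is_subfield_E] by blast
  have h_comp: "h (\<tau> \<circ> \<tau>') = (h \<tau> + h \<tau>') mod 4" if "\<tau> \<in> gal_auts F E" "\<tau>' \<in> gal_auts F E" for \<tau> \<tau>'
    using h.hom_mult[of \<tau> \<tau>'] that by (simp add: gal_group_carrier gal_group_mult)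
  define \<sigma> where "\<sigma> = inv_into (gal_auts F E) h 1"
  have "(1::int) \<in> h ` gal_auts F E" using bij by (simp add: bij_betw_def)
  then have \<sigma>: "\<sigma> \<in> gal_auts F E" "h \<sigma> = 1"
    unfolding \<sigma>_def by (simp_all add: inv_into_into f_inv_into_f)
  have id: "id \<in> gal_auts F E" "h id = 0"
    using h.hom_one Gal_E.one_closed by (simp_all add: gal_group_one gal_group_carrier)
  have h_powers: "h (\<sigma> \<circ> \<sigma>) = 2" "h (\<sigma> \<circ> \<sigma> \<circ> \<sigma>) = 3" "h (\<sigma> \<circ> \<sigma> \<circ> \<sigma> \<circ> \<sigma>) = 0"
    using \<sigma> by (simp_all add: h_comp comp_closed)
  show thesis
  proof
    show "\<sigma> \<in> gal_auts F E" by (rule \<sigma>(1))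
    show "\<sigma> \<circ> \<sigma> \<noteq> id" using h_powers(1) id(2) by auto
    show "\<sigma> \<circ> \<sigma> \<circ> \<sigma> \<circ> \<sigma> = id" using h_powers(3) id \<sigma> by (intro h_inj) (simp_all add: comp_closed)
    fix \<tau> assume \<tau>: "\<tau> \<in> gal_auts F E"
    then have "h \<tau> \<in> {0..<4}" using bij by (auto simp: bij_betw_def)
    then have "h \<tau> = h id \<or> h \<tau> = h \<sigma> \<or> h \<tau> = h (\<sigma> \<circ> \<sigma>) \<or> h \<tau> = h (\<sigma> \<circ> \<sigma> \<circ> \<sigma>)"
      using id \<sigma> h_powers by auto
    then show "\<tau> = id \<or> \<tau> = \<sigma> \<or> \<tau> = \<sigma> \<circ> \<sigma> \<or> \<tau> = \<sigma> \<circ> \<sigma> \<circ> \<sigma>"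
      using h_inj \<tau> id \<sigma> comp_closed by meson
  qed
qed

lemma generator_fixed_mem_F:
  assumes "\<And>\<tau>. \<tau> \<in> gal_auts F E \<Longrightarrow> \<tau> = id \<or> \<tau> = \<sigma> \<or> \<tau> = \<sigma> \<circ> \<sigma> \<or> \<tau> = \<sigma> \<circ> \<sigma> \<circ> \<sigma>"
    and "x \<in> E" "\<sigma> x = x"
  shows "x \<in> F"
proof -
  have "\<tau> x = x" if "\<tau> \<in> carrier (gal_group F E)" for \<tau>
    using assms(1)[of \<tau>] that assms(3) by (auto simp: gal_group_carrier)
  then show ?thesis using galois assms(2) by (auto simp: galois_ext_def)
qed

lemma gal_auts_UNIV_stable:
  assumes k: "k \<in> gal_auts F UNIV" and e: "e \<in> E"
  shows "k e \<in> E"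
proof -
  obtain \<sigma> where \<sigma>: "\<sigma> \<in> gal_auts F E" "\<sigma> \<circ> \<sigma> \<circ> \<sigma> \<circ> \<sigma> = id"
    and all: "\<And>\<tau>. \<tau> \<in> gal_auts F E \<Longrightarrow> \<tau> = id \<or> \<tau> = \<sigma> \<or> \<tau> = \<sigma> \<circ> \<sigma> \<or> \<tau> = \<sigma> \<circ> \<sigma> \<circ> \<sigma>"
    using exists_generator by blast
  note \<sigma>_hom = gal_autsD(1,2)[OF is_subfield_E \<sigma>(1)] and \<sigma>_closed = gal_aut_closed[OF is_subfield_E \<sigma>(1)]
  note E_closed = is_subfieldD(3,5)[OF is_subfield_E]
  define e1 e2 e3 where "e1 = \<sigma> e" and "e2 = \<sigma> e1" and "e3 = \<sigma> e2"
  have E: "e1 \<in> E" "e2 \<in> E" "e3 \<in> E" using e \<sigma>_closed by (simp_all add: e1_def e2_def e3_def)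
  have \<sigma>_e3: "\<sigma> e3 = e" using fun_cong[OF \<sigma>(2), of e] by (simp add: e1_def e2_def e3_def)
  txt \<open>\<open>\<sigma>\<close> permutes \<open>e, e1, e2, e3\<close> cyclically, so it fixes their elementary symmetric functions.\<close>
  have "\<sigma> (e + e1 + e2 + e3) = e + e1 + e2 + e3"
    and "\<sigma> (e * e1 + e * e2 + e * e3 + e1 * e2 + e1 * e3 + e2 * e3)
      = e * e1 + e * e2 + e * e3 + e1 * e2 + e1 * e3 + e2 * e3"
    and "\<sigma> (e * e1 * e2 + e * e1 * e3 + e * e2 * e3 + e1 * e2 * e3)
      = e * e1 * e2 + e * e1 * e3 + e * e2 * e3 + e1 * e2 * e3"
    and "\<sigma> (e * e1 * e2 * e3) = e * e1 * e2 * e3"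
    using e E by (simp_all add: \<sigma>_hom E_closed \<sigma>_e3 flip: e1_def e2_def e3_def; simp add: algebra_simps)+
  then have "k e = e \<or> k e = e1 \<or> k e = e2 \<or> k e = e3"
    using e E by (intro gal_aut_root_of_quartic[OF k] generator_fixed_mem_F[OF all]) (simp_all add: E_closed)
  then show ?thesis using e E by auto
qed

lemma involution_fixes_sqrt:
  assumes \<tau>: "\<tau> \<in> gal_auts F E" "\<tau> \<circ> \<tau> = id" and r: "r \<in> E" "r \<notin> F" "r * r \<in> F"
  shows "\<tau> r = r"
proof -
  obtain \<sigma> where \<sigma>: "\<sigma> \<in> gal_auts F E" "\<sigma> \<circ> \<sigma> \<noteq> id" "\<sigma> \<circ> \<sigma> \<circ> \<sigma> \<circ> \<sigma> = id"
    and all: "\<And>\<tau>. \<tau> \<in> gal_auts F E \<Longrightarrow> \<tau> = id \<or> \<tau> = \<sigma> \<or> \<tau> = \<sigma> \<circ> \<sigma> \<or> \<tau> = \<sigma> \<circ> \<sigma> \<circ> \<sigma>"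
    using exists_generator by blast
  have "\<sigma> r * \<sigma> r = r * r"
    using gal_autsD(2,4)[OF is_subfield_E \<sigma>(1)] r by (metis)
  then have "\<sigma> r = r \<or> \<sigma> r = - r" by (simp add: square_eq_iff)
  moreover have "\<sigma> r \<noteq> r" using generator_fixed_mem_F[OF all r(1)] r(2) by blast
  ultimately have "\<sigma> (\<sigma> r) = r"
    using gal_aut_uminus[OF is_subfield_E \<sigma>(1) r(1)] by simp
  moreover have "\<tau> = id \<or> \<tau> = \<sigma> \<circ> \<sigma>"
  proof -
    have "\<sigma> \<circ> \<sigma> \<circ> \<sigma> \<circ> (\<sigma> \<circ> \<sigma> \<circ> \<sigma>) = \<sigma> \<circ> \<sigma>" using \<sigma>(3) by (simp add: comp_assoc)
    then show ?thesis using all[OF \<tau>(1)] \<tau>(2) \<sigma>(2) by auto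
  qed
  ultimately show ?thesis by auto
qed

end

section \<open>Galois extensions with group \<open>G\<^sub>1\<close>\<close>

text \<open>\<open>X\<close>, \<open>Y\<close> correspond to the generators of \<open>G\<^sub>1 \<cong> Gal(L/F)\<close>, and \<open>\<Psi>\<close> to the composite
  with \<open>G\<^sub>1 \<rightarrow> Q16\<close>.\<close>

locale G1_galois =
  fixes F :: "'l::field set" and X Y :: "'l \<Rightarrow> 'l" and \<Psi> :: "('l \<Rightarrow> 'l) \<Rightarrow> int \<times> int"
  assumes two_nonzero: "(2::'l) \<noteq> 0"
    and galois: "galois_ext F UNIV"
    and finite_Gal: "finite (carrier (gal_group F UNIV))"
    and relations: "G1_relations (gal_group F UNIV) X Y"
    and generated: "carrier (gal_group F UNIV) = generate (gal_group F UNIV) {X, Y}"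
    and Psi_hom: "\<Psi> \<in> hom (gal_group F UNIV) Q16"
    and Psi_X: "\<Psi> X = Q16_x" and Psi_Y: "\<Psi> Y = Q16_y"
begin

abbreviation \<Gamma> :: "('l \<Rightarrow> 'l) monoid" where "\<Gamma> \<equiv> gal_group F UNIV"

lemma is_subfield_F: "is_subfield F"
  using galois by (simp add: galois_ext_def)

sublocale Gal: group \<Gamma>
  by (rule group_gal_group[OF is_subfield_UNIV]) simp

sublocale Psi: group_hom \<Gamma> Q16 \<Psi>
  using Psi_hom group_Q16 by (simp add: group_hom_def group_hom_axioms_def Gal.is_group)

lemma XY_closed [simp]: "X \<in> carrier \<Gamma>" "Y \<in> carrier \<Gamma>"
  using relations by (simp_all add: G1_relations_def)

lemma fixed_iff_mem_F: "(\<forall>g\<in>carrier \<Gamma>. g z = z) \<longleftrightarrow> z \<in> F"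
  using galois by (auto simp: galois_ext_def)

context
  fixes g assumes g: "g \<in> carrier \<Gamma>"
begin

lemma Gal_in_gal_auts: "g \<in> gal_auts F UNIV"
  using g by (simp add: gal_group_carrier)

lemma Gal_add [simp]: "g (x + y) = g x + g y"
  and Gal_mult [simp]: "g (x * y) = g x * g y"
  and Gal_one [simp]: "g 1 = 1"
  and Gal_fixes_F: "x \<in> F \<Longrightarrow> g x = x"
  using gal_autsD[OF is_subfield_UNIV Gal_in_gal_auts] by auto

lemma Gal_zero [simp]: "g 0 = 0"
  by (simp add: gal_aut_zero[OF is_subfield_UNIV Gal_in_gal_auts])

lemma Gal_uminus [simp]: "g (- x) = - g x"
  by (simp add: gal_aut_uminus[OF is_subfield_UNIV Gal_in_gal_auts])

lemma Gal_diff [simp]: "g (x - y) = g x - g y"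
  by (simp add: gal_aut_diff[OF is_subfield_UNIV Gal_in_gal_auts])

lemma Gal_divide [simp]: "g (x / y) = g x / g y"
  by (simp add: gal_aut_divide[OF is_subfield_UNIV Gal_in_gal_auts])

lemma Gal_inverse [simp]: "g (inverse x) = inverse (g x)"
  by (simp add: gal_aut_inverse[OF is_subfield_UNIV Gal_in_gal_auts])

lemma Gal_power [simp]: "g (x ^ n) = g x ^ n"
  by (simp add: gal_aut_power[OF is_subfield_UNIV Gal_in_gal_auts])

lemma Gal_eq_iff [simp]: "g x = g y \<longleftrightarrow> x = y"
  by (simp add: gal_aut_eq_iff[OF is_subfield_UNIV Gal_in_gal_auts])

lemma Gal_eq_0_iff [simp]: "g x = 0 \<longleftrightarrow> x = 0"
  using Gal_eq_iff[of x 0] by simp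

lemma Gal_of_nat [simp]: "g (of_nat n) = of_nat n"
  by (induction n) simp_all

lemma Gal_numeral [simp]: "g (numeral n) = numeral n"
  using Gal_of_nat[of "numeral n"] by simp

lemma Gal_sum: "g (\<Sum>x\<in>A. f x) = (\<Sum>x\<in>A. g (f x))"
  by (induction A rule: infinite_finite_induct) simp_all

lemma Gal_inv_apply [simp]: "(inv\<^bsub>\<Gamma>\<^esub> g) (g z) = z" "g ((inv\<^bsub>\<Gamma>\<^esub> g) z) = z"
  using Gal.l_inv[OF g] Gal.r_inv[OF g] by (metis comp_apply gal_group_mult gal_group_one id_apply)+

end

lemma Gal_mult_apply: "(g \<otimes>\<^bsub>\<Gamma>\<^esub> h) z = g (h z)"
  by (simp add: gal_group_mult)

lemma Gal_one_apply: "\<one>\<^bsub>\<Gamma>\<^esub> z = z"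
  by (simp add: gal_group_one)

lemma Gal_induct [consumes 1, case_names X Y one inv_X inv_Y mult]:
  assumes "g \<in> carrier \<Gamma>" "P X" "P Y" "P \<one>\<^bsub>\<Gamma>\<^esub>" "P (inv\<^bsub>\<Gamma>\<^esub> X)" "P (inv\<^bsub>\<Gamma>\<^esub> Y)"
    and "\<And>g h. g \<in> carrier \<Gamma> \<Longrightarrow> h \<in> carrier \<Gamma> \<Longrightarrow> P g \<Longrightarrow> P h \<Longrightarrow> P (g \<otimes>\<^bsub>\<Gamma>\<^esub> h)"
  shows "P g"
proof -
  have "g \<in> generate \<Gamma> {X, Y}" using assms(1) generated by simp
  then show ?thesis
  proof (induction rule: generate.induct)
    case one
    show ?case by (rule assms(4))
  next
    case (incl h)
    then show ?case using assms(2,3) by auto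
  next
    case (inv h)
    then show ?case using assms(5,6) by auto
  next
    case (eng h1 h2)
    then show ?case using assms(7) generated by auto
  qed
qed

lemma fixed_by_XY_mem_F:
  assumes "X z = z" "Y z = z"
  shows "z \<in> F"
proof -
  have "g z = z" if "g \<in> carrier \<Gamma>" for g
    using that
  proof (induction rule: Gal_induct)
    case inv_X
    then show ?case using Gal_inv_apply(1)[of X z] assms by simp
  next
    case inv_Y
    then show ?case using Gal_inv_apply(1)[of Y z] assms by simp
  qed (simp_all add: assms Gal_mult_apply Gal_one_apply)
  then show ?thesis using fixed_iff_mem_F by blast
qed

lemma Psi_XY: "\<Psi> X = (0, 1)" "\<Psi> Y = (1, 0)"
  by (simp_all add: Psi_X Psi_Y Q16_x_def Q16_y_def)

lemma Psi_values [simp]: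
  "\<Psi> (X \<otimes>\<^bsub>\<Gamma>\<^esub> X) = (0, 2)" "\<Psi> (Y \<otimes>\<^bsub>\<Gamma>\<^esub> X) = (1, 1)"
  by (simp_all add: Psi_X Psi_Y Q16_x_def Q16_y_def Q16_mult)

lemma X_pow_4: "X [^]\<^bsub>\<Gamma>\<^esub> (4::nat) = \<one>\<^bsub>\<Gamma>\<^esub>"
  using relations by (simp add: G1_relations_def)

lemma Y_Y_apply [simp]: "Y (Y z) = z"
proof -
  have "Y \<otimes>\<^bsub>\<Gamma>\<^esub> Y = \<one>\<^bsub>\<Gamma>\<^esub>" using relations by (simp add: G1_relations_def numeral_eq_Suc)
  then show ?thesis by (metis Gal_mult_apply Gal_one_apply)
qed

lemma chi_x_eigenvector:
  assumes "X u = - u" "Y u = u" "g \<in> carrier \<Gamma>"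
  shows "g u = chi_x (\<Psi> g) * u"
  using assms(3)
proof (induction rule: Gal_induct)
  case inv_X
  have "X ((inv\<^bsub>\<Gamma>\<^esub> X) u) = X (- u)" using assms(1) by simp
  then have "(inv\<^bsub>\<Gamma>\<^esub> X) u = - u" by (simp only: Gal_eq_iff[OF XY_closed(1)])
  then show ?case by (simp add: chi_x_def Q16_x_def Q16_inv carrier_Q16 Psi_X)
next
  case inv_Y
  have "Y ((inv\<^bsub>\<Gamma>\<^esub> Y) u) = Y u" using assms(2) by simp
  then have "(inv\<^bsub>\<Gamma>\<^esub> Y) u = u" by (simp only: Gal_eq_iff[OF XY_closed(2)])
  then show ?case by (simp add: chi_x_def Q16_y_def Q16_inv carrier_Q16 Psi_Y)
next
  case (mult g h)
  have "(g \<otimes>\<^bsub>\<Gamma>\<^esub> h) u = chi_x (\<Psi> h) * (chi_x (\<Psi> g) * u)"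
    using mult by (simp add: Gal_mult_apply chi_x_def)
  then show ?case using mult by (simp add: chi_x_mult)
next
  case one
  have "chi_x (\<Psi> \<one>\<^bsub>\<Gamma>\<^esub>) = (1::'l)" by (simp add: chi_x_def Q16_one)
  then show ?case by (metis Gal_one_apply mult_1)
qed (use assms in \<open>simp_all add: chi_x_def Psi_XY\<close>)

definition resolvent :: "(int \<times> int \<Rightarrow> 'l) \<Rightarrow> 'l \<Rightarrow> 'l" where
  "resolvent c w = (\<Sum>g\<in>carrier \<Gamma>. c (\<Psi> g) * g w)"

lemma resolvent_eigen:
  assumes h: "h \<in> carrier \<Gamma>" and c_F: "\<And>q. c q \<in> F"
    and c_inv_mult: "\<And>g. g \<in> carrier \<Gamma> \<Longrightarrow> c (\<Psi> (inv\<^bsub>\<Gamma>\<^esub> h \<otimes>\<^bsub>\<Gamma>\<^esub> g)) = \<kappa> * c (\<Psi> g)"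
  shows "h (resolvent c w) = \<kappa> * resolvent c w"
proof -
  have "h (resolvent c w) = (\<Sum>g\<in>carrier \<Gamma>. c (\<Psi> (inv\<^bsub>\<Gamma>\<^esub> h \<otimes>\<^bsub>\<Gamma>\<^esub> (h \<otimes>\<^bsub>\<Gamma>\<^esub> g))) * (h \<otimes>\<^bsub>\<Gamma>\<^esub> g) w)"
    using h by (simp add: resolvent_def Gal_sum Gal_fixes_F[OF h c_F] Gal_mult_apply
        Gal.m_assoc[symmetric])
  also have "\<dots> = (\<Sum>g\<in>carrier \<Gamma>. c (\<Psi> (inv\<^bsub>\<Gamma>\<^esub> h \<otimes>\<^bsub>\<Gamma>\<^esub> g)) * g w)"
    using Gal.group_l_invI h
    by (intro sum.reindex_bij_betw bij_betwI[where g = "\<lambda>g. inv\<^bsub>\<Gamma>\<^esub> h \<otimes>\<^bsub>\<Gamma>\<^esub> g"])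
       (auto simp: Gal.m_assoc[symmetric])
  also have "\<dots> = \<kappa> * resolvent c w"
    by (simp add: resolvent_def c_inv_mult sum_distrib_left mult.assoc)
  finally show ?thesis .
qed

lemma resolvent_nonzero:
  assumes "c \<one>\<^bsub>Q16\<^esub> \<noteq> 0"
  obtains w where "resolvent c w \<noteq> 0"
proof -
  have "\<not> (\<forall>w. (\<Sum>g\<in>carrier \<Gamma>. c (\<Psi> g) * g w) = 0)"
    using dedekind_independence[OF finite_Gal, of "\<lambda>g. c (\<Psi> g)"] assms Psi.hom_one Gal.one_closed
    by (metis Gal_mult Gal_one)
  then show thesis using that by (auto simp: resolvent_def)
qed

lemma exists_eigenvector:
  assumes "c \<one>\<^bsub>Q16\<^esub> \<noteq> 0" "\<And>q. c q \<in> F"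
    and "\<And>h g. h \<in> carrier \<Gamma> \<Longrightarrow> P h \<Longrightarrow> g \<in> carrier \<Gamma> \<Longrightarrow>
      c (\<Psi> (inv\<^bsub>\<Gamma>\<^esub> h \<otimes>\<^bsub>\<Gamma>\<^esub> g)) = \<kappa> h * c (\<Psi> g)"
  obtains r where "r \<noteq> 0" "\<And>h. h \<in> carrier \<Gamma> \<Longrightarrow> P h \<Longrightarrow> h r = \<kappa> h * r"
proof -
  obtain w where w: "resolvent c w \<noteq> 0" using resolvent_nonzero[of c] assms(1) by blast
  have "h (resolvent c w) = \<kappa> h * resolvent c w" if "h \<in> carrier \<Gamma>" "P h" for h
    using that assms(2,3) by (intro resolvent_eigen) auto
  then show thesis using that w by blast
qed

lemma zero_one_mem_F [simp]: "0 \<in> F" "1 \<in> F" "- 1 \<in> F"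
  using is_subfieldD(1,2,7)[OF is_subfield_F] by auto

lemma exists_chi_x_eigenvector:
  obtains r where "r \<noteq> 0" "\<And>g. g \<in> carrier \<Gamma> \<Longrightarrow> g r = chi_x (\<Psi> g) * r"
  by (rule exists_eigenvector[of chi_x "\<lambda>_. True" "\<lambda>h. chi_x (\<Psi> h)"])
     (simp_all add: chi_x_inv_mult, simp_all add: chi_x_def Q16_one)

lemma exists_chi_y_eigenvector:
  obtains s where "s \<noteq> 0" "\<And>g. g \<in> carrier \<Gamma> \<Longrightarrow> g s = chi_y (\<Psi> g) * s"
  by (rule exists_eigenvector[of chi_y "\<lambda>_. True" "\<lambda>h. chi_y (\<Psi> h)"])
     (simp_all add: chi_y_inv_mult, simp_all add: chi_y_def Q16_one)

lemma exists_chi_xx_eigenvector: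
  obtains \<theta> where "\<theta> \<noteq> 0"
    "\<And>g. g \<in> carrier \<Gamma> \<Longrightarrow> even (snd (\<Psi> g)) \<Longrightarrow> g \<theta> = chi_xx (\<Psi> g) * \<theta>"
  by (rule exists_eigenvector[of "extend_by_zero chi_xx" "\<lambda>h. even (snd (\<Psi> h))" "\<lambda>h. chi_xx (\<Psi> h)"])
     (simp_all add: chi_xx_inv_mult, simp_all add: extend_by_zero_def chi_xx_def Q16_one)

lemma exists_chi_xyx_eigenvector:
  obtains \<theta> where "\<theta> \<noteq> 0"
    "\<And>g. g \<in> carrier \<Gamma> \<Longrightarrow> even (snd (\<Psi> g)) \<Longrightarrow> g \<theta> = chi_xyx (\<Psi> g) * \<theta>"
  by (rule exists_eigenvector[of "extend_by_zero chi_xyx" "\<lambda>h. even (snd (\<Psi> h))" "\<lambda>h. chi_xyx (\<Psi> h)"])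
     (simp_all add: chi_xyx_inv_mult, simp_all add: extend_by_zero_def chi_xyx_def Q16_one)

lemma four_nonzero: "(4::'l) \<noteq> 0"
  using two_nonzero mult_eq_0_iff[of "2::'l" 2] by simp

lemma eq_neg_self_iff: "(x::'l) = - x \<longleftrightarrow> x = 0"
  using two_nonzero by (metis add_eq_0_iff2 mult_2 mult_eq_0_iff neg_0_equal_iff_equal)

lemma snd_Psi_inv_mult_even_iff:
  assumes "g \<in> carrier \<Gamma>" "h \<in> carrier \<Gamma>"
  shows "even (snd (\<Psi> (inv\<^bsub>\<Gamma>\<^esub> h \<otimes>\<^bsub>\<Gamma>\<^esub> g))) \<longleftrightarrow> (even (snd (\<Psi> g)) \<longleftrightarrow> even (snd (\<Psi> h)))"
  using assms by (simp add: snd_Q16_inv_mult even_mod_4_iff)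

text \<open>If \<open>z\<close> is fixed by the kernel of \<open>R \<circ> \<Psi>\<close>, then \<open>g z\<close> depends only on \<open>R (\<Psi> g)\<close>.\<close>

lemma fixed_by_kernel_apply_eq:
  assumes z: "\<And>h. h \<in> carrier \<Gamma> \<Longrightarrow> P (\<Psi> h) \<Longrightarrow> h z = z"
    and P: "\<And>g h. g \<in> carrier \<Gamma> \<Longrightarrow> h \<in> carrier \<Gamma> \<Longrightarrow> P (\<Psi> (inv\<^bsub>\<Gamma>\<^esub> h \<otimes>\<^bsub>\<Gamma>\<^esub> g)) \<longleftrightarrow> R (\<Psi> g) = R (\<Psi> h)"
    and g: "g \<in> carrier \<Gamma>" "h \<in> carrier \<Gamma>" and R: "R (\<Psi> g) = R (\<Psi> h)"
  shows "g z = h z"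
proof -
  have "(inv\<^bsub>\<Gamma>\<^esub> h \<otimes>\<^bsub>\<Gamma>\<^esub> g) z = z" using z P g R by simp
  moreover have "g = h \<otimes>\<^bsub>\<Gamma>\<^esub> (inv\<^bsub>\<Gamma>\<^esub> h \<otimes>\<^bsub>\<Gamma>\<^esub> g)" using g by (simp add: Gal.m_assoc[symmetric])
  ultimately show ?thesis by (metis Gal_mult_apply)
qed

lemma Gal_apply_X_conj:
  "h \<in> carrier \<Gamma> \<Longrightarrow> h (X z) = X ((inv\<^bsub>\<Gamma>\<^esub> X \<otimes>\<^bsub>\<Gamma>\<^esub> h \<otimes>\<^bsub>\<Gamma>\<^esub> X) z)"
  by (simp add: Gal_mult_apply)

text \<open>In the next two lemmas \<open>\<gamma> = X \<theta> / \<theta>\<close> for an eigenvector \<open>\<theta>\<close> of \<open>chi_xx\<close>, resp. \<open>chi_xyx\<close>.\<close>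

lemma exists_X_norm_minus_one:
  obtains \<gamma> where "X \<gamma> * \<gamma> = - 1" "\<And>h. h \<in> carrier \<Gamma> \<Longrightarrow> even (snd (\<Psi> h)) \<Longrightarrow> h \<gamma> = \<gamma>"
proof -
  obtain \<theta> where \<theta>: "\<theta> \<noteq> 0"
    and \<theta>_eigen: "\<And>g. g \<in> carrier \<Gamma> \<Longrightarrow> even (snd (\<Psi> g)) \<Longrightarrow> g \<theta> = chi_xx (\<Psi> g) * \<theta>"
    using exists_chi_xx_eigenvector by blast
  have "h (X \<theta> / \<theta>) = X \<theta> / \<theta>" if h: "h \<in> carrier \<Gamma>" and even: "even (snd (\<Psi> h))" for h
  proof -
    let ?k = "inv\<^bsub>\<Gamma>\<^esub> X \<otimes>\<^bsub>\<Gamma>\<^esub> h \<otimes>\<^bsub>\<Gamma>\<^esub> X"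
    have "snd (\<Psi> ?k) = snd (\<Psi> h)" using h by (simp add: snd_Q16_conj)
    then have "?k \<theta> = chi_xx (\<Psi> h) * \<theta>"
      using \<theta>_eigen[of ?k] h even by (simp add: chi_xx_def)
    then have "h (X \<theta>) = chi_xx (\<Psi> h) * X \<theta>"
      using Gal_apply_X_conj[OF h] by (simp add: chi_xx_def)
    then show ?thesis using \<theta>_eigen[OF h even] h \<theta> by (simp add: chi_xx_def)
  qed
  moreover have "X (X \<theta>) = - \<theta>"
    using \<theta>_eigen[of "X \<otimes>\<^bsub>\<Gamma>\<^esub> X"] by (simp add: Gal_mult_apply chi_xx_def)
  then have "X (X \<theta> / \<theta>) * (X \<theta> / \<theta>) = - 1" using \<theta> by simp
  ultimately show thesis using that by blast
qed

lemma exists_X_norm_one: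
  obtains \<gamma> where "X \<gamma> * \<gamma> = 1" "Y \<gamma> = - \<gamma>"
    "\<And>h. h \<in> carrier \<Gamma> \<Longrightarrow> even (fst (\<Psi> h)) \<Longrightarrow> even (snd (\<Psi> h)) \<Longrightarrow> h \<gamma> = \<gamma>"
proof -
  obtain \<theta> where \<theta>: "\<theta> \<noteq> 0"
    and \<theta>_eigen: "\<And>g. g \<in> carrier \<Gamma> \<Longrightarrow> even (snd (\<Psi> g)) \<Longrightarrow> g \<theta> = chi_xyx (\<Psi> g) * \<theta>"
    using exists_chi_xyx_eigenvector by blast
  have "h (X \<theta> / \<theta>) = X \<theta> / \<theta>"
    if h: "h \<in> carrier \<Gamma>" and "even (fst (\<Psi> h))" "even (snd (\<Psi> h))" for h
  proof -
    let ?k = "inv\<^bsub>\<Gamma>\<^esub> X \<otimes>\<^bsub>\<Gamma>\<^esub> h \<otimes>\<^bsub>\<Gamma>\<^esub> X"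
    have "\<Psi> ?k = \<Psi> h" using h that by (simp add: Psi_X Q16_x_conj)
    then have "h (X \<theta>) = chi_xyx (\<Psi> h) * X \<theta>"
      using Gal_apply_X_conj[OF h] \<theta>_eigen[of ?k] h that by (simp add: chi_xyx_def)
    then show ?thesis using \<theta>_eigen[OF h] h that \<theta> by (simp add: chi_xyx_def)
  qed
  moreover have "Y (X \<theta> / \<theta>) = - (X \<theta> / \<theta>)"
  proof -
    have "\<Psi> (inv\<^bsub>\<Gamma>\<^esub> X \<otimes>\<^bsub>\<Gamma>\<^esub> Y \<otimes>\<^bsub>\<Gamma>\<^esub> X) = (3, 0)"
      by (simp add: Psi_X Psi_Y Q16_x_def Q16_y_def Q16_inv Q16_mult carrier_Q16)
    then have "Y (X \<theta>) = - X \<theta>"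
      using Gal_apply_X_conj[of Y \<theta>] \<theta>_eigen[of "inv\<^bsub>\<Gamma>\<^esub> X \<otimes>\<^bsub>\<Gamma>\<^esub> Y \<otimes>\<^bsub>\<Gamma>\<^esub> X"] by (simp add: chi_xyx_def)
    then show ?thesis using \<theta>_eigen[of Y] by (simp add: chi_xyx_def Psi_XY)
  qed
  moreover have "X (X \<theta>) = \<theta>"
    using \<theta>_eigen[of "X \<otimes>\<^bsub>\<Gamma>\<^esub> X"] by (simp add: Gal_mult_apply chi_xyx_def)
  then have "X (X \<theta> / \<theta>) * (X \<theta> / \<theta>) = 1" using \<theta> by simp
  ultimately show thesis using that by blast
qed

context
  fixes E assumes E: "is_subfield E" and stable: "\<And>h e. h \<in> carrier \<Gamma> \<Longrightarrow> e \<in> E \<Longrightarrow> h e \<in> E"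
begin

lemma restrict_aut_gal_auts:
  assumes g: "g \<in> carrier \<Gamma>"
  shows "restrict_aut E g \<in> gal_auts F E"
proof -
  have "bij_betw (restrict_aut E g) E E"
    by (rule bij_betwI[where g = "restrict_aut E (inv\<^bsub>\<Gamma>\<^esub> g)"])
       (use g stable in \<open>auto simp: restrict_aut_def\<close>)
  then show ?thesis
    using g is_subfieldD[OF E] by (auto simp: gal_auts_def restrict_aut_def Gal_fixes_F)
qed

lemma restrict_aut_mult:
  "g \<in> carrier \<Gamma> \<Longrightarrow> h \<in> carrier \<Gamma> \<Longrightarrow>
    restrict_aut E (g \<otimes>\<^bsub>\<Gamma>\<^esub> h) = restrict_aut E g \<circ> restrict_aut E h"
  using stable by (auto simp: restrict_aut_def Gal_mult_apply)

end

text \<open>\<open>Y\<close> restricts to an involution of the cyclic group \<open>Gal(E/F)\<close>, hence to the identity or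
  the square of a generator; both fix \<open>r\<close>.\<close>

lemma C4_extension_sqrt_eigen:
  assumes r: "r * r \<in> F" "r \<notin> F" "r \<in> E" and "C4_extension F E" and g: "g \<in> carrier \<Gamma>"
  shows "g r = chi_x (\<Psi> g) * r"
proof -
  interpret C4_extension F E by fact
  have stable: "h e \<in> E" if "h \<in> carrier \<Gamma>" "e \<in> E" for h e
    using gal_auts_UNIV_stable[OF Gal_in_gal_auts] that by blast
  have "restrict_aut E Y \<circ> restrict_aut E Y = id"
    using stable[of Y] by (auto simp: restrict_aut_def)
  moreover have "restrict_aut E Y \<in> gal_auts F E"
    by (rule restrict_aut_gal_auts[of E Y]) (use is_subfield_E stable in auto)
  ultimately have "restrict_aut E Y r = r"
    using involution_fixes_sqrt r by blast
  then have Y_r: "Y r = r" using r(3) by (simp add: restrict_aut_def)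
  have "X r * X r = r * r" using r(1) by (metis Gal_mult Gal_fixes_F XY_closed(1))
  then have "X r = r \<or> X r = - r" by (simp add: square_eq_iff)
  moreover have "X r \<noteq> r" using fixed_by_XY_mem_F Y_r r(2) by blast
  ultimately show ?thesis using chi_x_eigenvector Y_r g by simp
qed

lemma snd_Psi_inv_mult_eq_0_iff:
  assumes "g \<in> carrier \<Gamma>" "h \<in> carrier \<Gamma>"
  shows "snd (\<Psi> (inv\<^bsub>\<Gamma>\<^esub> h \<otimes>\<^bsub>\<Gamma>\<^esub> g)) = 0 \<longleftrightarrow> snd (\<Psi> g) = snd (\<Psi> h)"
proof -
  have "snd (\<Psi> g) \<in> {0..<4}" "snd (\<Psi> h) \<in> {0..<4}"
    using assms Psi.hom_closed by (auto simp: carrier_Q16 mem_Times_iff)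
  then show ?thesis using assms by (auto simp: snd_Q16_inv_mult) presburger
qed

end

lemma G1_galois_of_iso:
  fixes F :: "'l::field set"
  assumes two: "(2::'l) \<noteq> 0" and galois: "galois_ext F UNIV" and iso: "gal_group F UNIV \<cong> G1"
  obtains X Y \<Psi> where "G1_galois F X Y \<Psi>"
proof -
  let ?\<Gamma> = "gal_group F (UNIV :: 'l set)"
  have group: "group ?\<Gamma>"
    using galois by (intro group_gal_group is_subfield_UNIV) simp
  obtain \<phi> where \<phi>: "\<phi> \<in> iso G1 ?\<Gamma>"
    using iso group.iso_sym[OF group] by (auto simp: is_iso_def)
  interpret \<phi>: group_hom G1 ?\<Gamma> \<phi>
    using \<phi> group group_G1 by (simp add: group_hom_def group_hom_axioms_def iso_def)
  obtain \<psi> where \<psi>: "\<psi> \<in> hom G1 Q16" "\<psi> G1_x = Q16_x" "\<psi> G1_y = Q16_y"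
    using G1_lift[OF group_Q16 G1_relations_Q16] by blast
  define \<phi>' where "\<phi>' = inv_into (carrier G1) \<phi>"
  have \<phi>': "\<phi>' \<in> hom ?\<Gamma> G1" "\<And>x. x \<in> carrier G1 \<Longrightarrow> \<phi>' (\<phi> x) = x"
    using group_G1 \<phi> by (simp_all add: \<phi>'_def group.iso_set_sym[THEN iso_imp_homomorphism] iso_def
        bij_betw_inv_into_left)
  have "G1_galois F (\<phi> G1_x) (\<phi> G1_y) (\<psi> \<circ> \<phi>')"
  proof
    have "carrier ?\<Gamma> = \<phi> ` carrier G1" using \<phi> by (simp add: iso_def bij_betw_def)
    then show "finite (carrier ?\<Gamma>)" "carrier ?\<Gamma> = generate ?\<Gamma> {\<phi> G1_x, \<phi> G1_y}"
      using finite_G1 \<phi>.generate_img[of "{G1_x, G1_y}"] G1_generated G1_relations_G1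
      by (auto simp: G1_relations_def)
    show "G1_relations ?\<Gamma> (\<phi> G1_x) (\<phi> G1_y)" by (rule \<phi>.G1_relations_hom[OF G1_relations_G1])
    show "\<psi> \<circ> \<phi>' \<in> hom ?\<Gamma> Q16" using hom_compose[OF \<phi>'(1) \<psi>(1)] .
    show "(\<psi> \<circ> \<phi>') (\<phi> G1_x) = Q16_x" "(\<psi> \<circ> \<phi>') (\<phi> G1_y) = Q16_y"
      using \<phi>'(2) \<psi>(2,3) G1_relations_G1 by (simp_all add: G1_relations_def)
  qed (fact two galois)+
  then show thesis by (rule that)
qed

section \<open>The quadratic subextension\<close>

lemma rigid_value_cases:
  assumes "rigid F c" "x \<in> F" "y \<in> F" "x * x + c * y * y \<noteq> 0"
  shows "(\<exists>t\<in>F. x * x + c * y * y = t * t) \<or> (\<exists>t\<in>F. x * x + c * y * y = c * t * t)"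
proof -
  have "x * x + c * y * y \<in> {x1 * x1 + c * x2 * x2 |x1 x2. x1 \<in> F \<and> x2 \<in> F} - {0}"
    using assms(2-4) by blast
  then show ?thesis using assms(1) unfolding rigid_def by blast
qed

locale G1_galois_kummer = G1_galois F X Y \<Psi> for F :: "'l::field set" and X Y \<Psi> +
  fixes r :: 'l
  assumes r_nonzero: "r \<noteq> 0"
    and r_eigen: "g \<in> carrier (gal_group F UNIV) \<Longrightarrow> g r = chi_x (\<Psi> g) * r"
begin

lemma X_r [simp]: "X r = - r" and Y_r [simp]: "Y r = r"
  using r_eigen[of X] r_eigen[of Y] by (simp_all add: chi_x_def Psi_XY)

lemma r_not_mem_F: "r \<notin> F"
  using Gal_fixes_F[of X r] r_nonzero eq_neg_self_iff by auto

lemma r_square_mem_F: "r * r \<in> F"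
proof -
  have "g (r * r) = r * r" if "g \<in> carrier \<Gamma>" for g
    using that by (simp add: r_eigen chi_x_def)
  then show ?thesis using fixed_iff_mem_F by blast
qed

lemma fixed_by_ker_chi_x:
  assumes z: "\<And>h. h \<in> carrier \<Gamma> \<Longrightarrow> even (snd (\<Psi> h)) \<Longrightarrow> h z = z"
  obtains p q where "p \<in> F" "q \<in> F" "z = p + q * r"
proof -
  have same_parity: "g z = h z" if "g \<in> carrier \<Gamma>" "h \<in> carrier \<Gamma>" "even (snd (\<Psi> g)) = even (snd (\<Psi> h))" for g h
    using fixed_by_kernel_apply_eq[where P = "\<lambda>q. even (snd q)" and R = "\<lambda>q. even (snd q)"]
      z snd_Psi_inv_mult_even_iff that by blast
  have XX: "X (X z) = z"
    using same_parity[of "X \<otimes>\<^bsub>\<Gamma>\<^esub> X" "\<one>\<^bsub>\<Gamma>\<^esub>"] by (simp add: Gal_mult_apply Gal_one_apply Q16_one)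
  have YX: "Y (X z) = X z"
    using same_parity[of "Y \<otimes>\<^bsub>\<Gamma>\<^esub> X" X] by (simp add: Gal_mult_apply Psi_XY)
  have Y: "Y z = z" using z[of Y] by (simp add: Psi_XY)
  define p where "p = (z + X z) / 2"
  define q where "q = (z - X z) / (2 * r)"
  have "p \<in> F" using XX YX Y by (intro fixed_by_XY_mem_F) (simp_all add: p_def add.commute)
  moreover have "q \<in> F"
    using XX YX Y by (intro fixed_by_XY_mem_F) (simp_all add: q_def divide_simps)
  moreover have "z = p + q * r"
    using two_nonzero four_nonzero r_nonzero by (simp add: p_def q_def field_simps)
  ultimately show thesis by (rule that)
qed

lemma minus_one_norm:
  obtains p q where "p \<in> F" "q \<in> F" "p * p - q * q * (r * r) = - 1"
proof -
  obtain \<gamma> where \<gamma>: "X \<gamma> * \<gamma> = - 1"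
    and fixed: "\<And>h. h \<in> carrier \<Gamma> \<Longrightarrow> even (snd (\<Psi> h)) \<Longrightarrow> h \<gamma> = \<gamma>"
    using exists_X_norm_minus_one by blast
  then obtain p q where pq: "p \<in> F" "q \<in> F" "\<gamma> = p + q * r"
    using fixed_by_ker_chi_x by blast
  have "X \<gamma> = p - q * r" using pq by (simp add: Gal_fixes_F)
  then have "(p - q * r) * (p + q * r) = - 1" using \<gamma> pq by simp
  then show thesis using pq that by (simp add: algebra_simps)
qed

lemma chi_y_eigenvector_square_norm:
  assumes s: "s \<noteq> 0" and s_eigen: "\<And>g. g \<in> carrier \<Gamma> \<Longrightarrow> g s = chi_y (\<Psi> g) * s"
  obtains p q where "p \<in> F" "q \<in> F" "(s * s) * (p * p - q * q * (r * r)) = 1"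
proof -
  obtain \<gamma> where X_\<gamma>: "X \<gamma> * \<gamma> = 1" and Y_\<gamma>: "Y \<gamma> = - \<gamma>"
    and \<gamma>_fixed: "\<And>h. h \<in> carrier \<Gamma> \<Longrightarrow> even (fst (\<Psi> h)) \<Longrightarrow> even (snd (\<Psi> h)) \<Longrightarrow> h \<gamma> = \<gamma>"
    using exists_X_norm_one by blast
  have X_s: "X s = s" and Y_s: "Y s = - s" using s_eigen[of X] s_eigen[of Y] by (simp_all add: chi_y_def Psi_XY)
  define u where "u = \<gamma> / s"
  have Y_u: "Y u = u" using Y_\<gamma> Y_s by (simp add: u_def)
  have "h u = u" if h: "h \<in> carrier \<Gamma>" and even: "even (snd (\<Psi> h))" for h
  proof (cases "even (fst (\<Psi> h))")
    case True
    then show ?thesis using \<gamma>_fixed[OF h True even] s_eigen[OF h] h by (simp add: u_def chi_y_def)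
  next
    case False
    let ?k = "inv\<^bsub>\<Gamma>\<^esub> Y \<otimes>\<^bsub>\<Gamma>\<^esub> h"
    have "even (fst (\<Psi> ?k))" "even (snd (\<Psi> ?k))"
      using Q16_y_shift[of "\<Psi> h"] h False even by (simp_all add: Psi_Y)
    then have "?k u = u" using \<gamma>_fixed[of ?k] s_eigen[of ?k] h by (simp add: u_def chi_y_def)
    moreover have "h = Y \<otimes>\<^bsub>\<Gamma>\<^esub> ?k" using h by (simp add: Gal.m_assoc[symmetric])
    ultimately show ?thesis using Y_u by (metis Gal_mult_apply)
  qed
  then obtain p q where pq: "p \<in> F" "q \<in> F" "u = p + q * r"
    using fixed_by_ker_chi_x by blast
  have \<gamma>: "\<gamma> = s * (p + q * r)" using pq(3) s by (simp add: u_def field_simps)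
  then have "X \<gamma> = s * (p - q * r)" using pq X_s by (simp add: Gal_fixes_F)
  then have "(s * (p - q * r)) * (s * (p + q * r)) = 1" using X_\<gamma> \<gamma> by simp
  then show thesis using pq that by (simp add: algebra_simps)
qed

lemma rigid_imp_sqrt_minus_one:
  assumes "rigid F (- (r * r))"
  obtains i where "i \<in> F" "i * i = - 1"
proof -
  obtain p q where pq: "p \<in> F" "q \<in> F" "p * p - q * q * (r * r) = - 1"
    by (rule minus_one_norm)
  then have "p * p + - (r * r) * q * q = - 1" by (simp add: algebra_simps)
  then have "(\<exists>t\<in>F. - 1 = t * t) \<or> (\<exists>t\<in>F. - 1 = - (r * r) * t * t)"
    using rigid_value_cases[OF assms pq(1,2)] by simp
  then show thesis
  proof (elim disjE bexE)
    fix t assume "t \<in> F" "- 1 = t * t"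
    then show thesis using that by auto
  next
    fix t assume t: "t \<in> F" "- 1 = - (r * r) * t * t"
    then have "t \<noteq> 0" and "(r * t) * (r * t) = 1 * 1" by (auto simp: algebra_simps)
    then have "r * t = 1 \<or> r * t = - 1" by (simp only: square_eq_iff)
    then have "r = 1 / t \<or> r = - 1 / t" using \<open>t \<noteq> 0\<close> by (auto simp: field_simps)
    moreover have "1 / t \<in> F" "- 1 / t \<in> F"
      using t(1) is_subfieldD(8)[OF is_subfield_F] zero_one_mem_F by blast+
    ultimately have "r \<in> F" by auto
    then show thesis using r_not_mem_F by simp
  qed
qed

theorem not_rigid: "\<not> rigid F (- (r * r))"
proof
  assume rigid: "rigid F (- (r * r))"
  then obtain i where i: "i \<in> F" "i * i = - 1" by (rule rigid_imp_sqrt_minus_one)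
  obtain s where s: "s \<noteq> 0" and s_eigen: "\<And>g. g \<in> carrier \<Gamma> \<Longrightarrow> g s = chi_y (\<Psi> g) * s"
    using exists_chi_y_eigenvector by blast
  have Y_s: "Y s = - s" using s_eigen[of Y] by (simp add: chi_y_def Psi_XY)
  have s_not_mem_F: "s \<notin> F" using Gal_fixes_F[of Y s] Y_s s eq_neg_self_iff by auto
  have ss: "s * s \<in> F"
  proof -
    have "g (s * s) = s * s" if "g \<in> carrier \<Gamma>" for g
      using that by (simp add: s_eigen chi_y_def)
    then show ?thesis using fixed_iff_mem_F by blast
  qed
  obtain p q where pq: "p \<in> F" "q \<in> F" "(s * s) * (p * p - q * q * (r * r)) = 1"
    using chi_y_eigenvector_square_norm[OF s s_eigen] by blast
  have "(s * s * p) * (s * s * p) + - (r * r) * (s * s * q) * (s * s * q)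
      = (s * s) * ((s * s) * (p * p - q * q * (r * r)))"
    by (simp add: algebra_simps)
  also have "\<dots> = s * s" using pq(3) by simp
  moreover have "s * s * p \<in> F" "s * s * q \<in> F"
    using ss pq(1,2) is_subfieldD(5)[OF is_subfield_F] by blast+
  ultimately have "(\<exists>t\<in>F. s * s = t * t) \<or> (\<exists>t\<in>F. s * s = - (r * r) * t * t)"
    using rigid_value_cases[OF rigid, of "s * s * p" "s * s * q"] s by simp
  then show False
  proof (elim disjE bexE)
    fix t assume "t \<in> F" "s * s = t * t"
    then have "s = t \<or> s = - t" by (simp add: square_eq_iff)
    then show False using \<open>t \<in> F\<close> s_not_mem_F is_subfieldD(7)[OF is_subfield_F] by auto
  next
    fix t assume t: "t \<in> F" "s * s = - (r * r) * t * t"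
    have "(i * t * r) * (i * t * r) = (i * i) * (r * r * t * t)" by (simp add: algebra_simps)
    then have "- (r * r) * t * t = (i * t * r) * (i * t * r)" using i(2) by simp
    then have "s = i * t * r \<or> s = - (i * t * r)" using t(2) by (simp add: square_eq_iff)
    moreover have "Y (i * t * r) = i * t * r" using i(1) t(1) by (simp add: Gal_fixes_F)
    ultimately have "Y s = s" by auto
    then show False using Y_s s eq_neg_self_iff by simp
  qed
qed

end

section \<open>The cyclic quartic subextension\<close>

locale G1_galois_cyclic = G1_galois_kummer F X Y \<Psi> r for F :: "'l::field set" and X Y \<Psi> r +
  fixes \<theta> :: 'l
  assumes \<theta>_nonzero: "\<theta> \<noteq> 0"
    and \<theta>_eigen: "g \<in> carrier (gal_group F UNIV) \<Longrightarrow> even (snd (\<Psi> g)) \<Longrightarrow> g \<theta> = chi_xx (\<Psi> g) * \<theta>"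
begin

definition C4_field :: "'l set" where
  "C4_field = {z. \<forall>h\<in>carrier \<Gamma>. snd (\<Psi> h) = 0 \<longrightarrow> h z = z}"

lemma X_X_\<theta> [simp]: "X (X \<theta>) = - \<theta>"
  using \<theta>_eigen[of "X \<otimes>\<^bsub>\<Gamma>\<^esub> X"] by (simp add: Gal_mult_apply chi_xx_def)

lemma X_\<theta>_nonzero: "X \<theta> \<noteq> 0"
  using \<theta>_nonzero by simp

lemma is_subfield_C4_field: "is_subfield C4_field"
  by (auto simp: is_subfield_def C4_field_def)

lemma F_subset_C4_field: "F \<subseteq> C4_field"
  by (auto simp: C4_field_def Gal_fixes_F)

lemma r_mem_C4_field: "r \<in> C4_field" and \<theta>_mem_C4_field: "\<theta> \<in> C4_field"
  by (auto simp: C4_field_def r_eigen \<theta>_eigen chi_x_def chi_xx_def)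

lemma C4_field_apply_eq:
  assumes "z \<in> C4_field" "g \<in> carrier \<Gamma>" "h \<in> carrier \<Gamma>" "snd (\<Psi> g) = snd (\<Psi> h)"
  shows "g z = h z"
  using fixed_by_kernel_apply_eq[where P = "\<lambda>q. snd q = 0" and R = snd] assms
    snd_Psi_inv_mult_eq_0_iff by (auto simp: C4_field_def)

lemma C4_field_stable:
  assumes g: "g \<in> carrier \<Gamma>" and z: "z \<in> C4_field"
  shows "g z \<in> C4_field"
proof -
  have "h (g z) = g z" if h: "h \<in> carrier \<Gamma>" "snd (\<Psi> h) = 0" for h
  proof -
    have "snd (\<Psi> (h \<otimes>\<^bsub>\<Gamma>\<^esub> g)) = snd (\<Psi> g)"
      using g h Psi.hom_closed by (simp add: snd_Q16_mult carrier_Q16 mem_Times_iff)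
    then show ?thesis using C4_field_apply_eq[OF z, of "h \<otimes>\<^bsub>\<Gamma>\<^esub> g" g] g h by (simp add: Gal_mult_apply)
  qed
  then show ?thesis by (simp add: C4_field_def)
qed

text \<open>\<open>C4_field = F(r, \<theta>)\<close>: split \<open>z\<close> into eigencomponents for \<open>X\<^sup>2\<close>, which are \<open>F(r)\<close> and
  \<open>F(r) \<theta>\<close>.\<close>

lemma C4_field_decomp:
  assumes z: "z \<in> C4_field"
  obtains p1 q1 p2 q2 where "p1 \<in> F" "q1 \<in> F" "p2 \<in> F" "q2 \<in> F"
    "z = p1 + q1 * r + (p2 + q2 * r) * \<theta>"
proof -
  let ?z' = "X (X z)"
  have cases: "h z = z \<and> h ?z' = ?z' \<and> chi_xx (\<Psi> h) = (1::'l) \<or>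
               h z = ?z' \<and> h ?z' = z \<and> chi_xx (\<Psi> h) = (- 1::'l)"
    if h: "h \<in> carrier \<Gamma>" and even: "even (snd (\<Psi> h))" for h
  proof -
    have "snd (\<Psi> h) = 0 \<or> snd (\<Psi> h) = 2"
      using Q16_coordinates(2)[OF Psi.hom_closed[OF h]] even by auto
    moreover have "snd (\<Psi> (h \<otimes>\<^bsub>\<Gamma>\<^esub> (X \<otimes>\<^bsub>\<Gamma>\<^esub> X))) = (snd (\<Psi> h) + 2) mod 4"
      using h by (simp add: snd_Q16_mult)
    ultimately show ?thesis
      using C4_field_apply_eq[OF z h, of "\<one>\<^bsub>\<Gamma>\<^esub>"] C4_field_apply_eq[OF z h, of "X \<otimes>\<^bsub>\<Gamma>\<^esub> X"]
        C4_field_apply_eq[OF z, of "h \<otimes>\<^bsub>\<Gamma>\<^esub> (X \<otimes>\<^bsub>\<Gamma>\<^esub> X)" "\<one>\<^bsub>\<Gamma>\<^esub>"]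
        C4_field_apply_eq[OF z, of "h \<otimes>\<^bsub>\<Gamma>\<^esub> (X \<otimes>\<^bsub>\<Gamma>\<^esub> X)" "X \<otimes>\<^bsub>\<Gamma>\<^esub> X"] h
      by (auto simp: chi_xx_def Gal_mult_apply Gal_one_apply Q16_one)
  qed
  define z_plus z_minus where "z_plus = (z + ?z') / 2" and "z_minus = (z - ?z') / 2"
  have "h z_plus = z_plus" if "h \<in> carrier \<Gamma>" "even (snd (\<Psi> h))" for h
    using cases[OF that] that(1) by (auto simp: z_plus_def add.commute)
  then obtain p1 q1 where pq1: "p1 \<in> F" "q1 \<in> F" "z_plus = p1 + q1 * r"
    using fixed_by_ker_chi_x by blast
  have "h (z_minus / \<theta>) = z_minus / \<theta>" if "h \<in> carrier \<Gamma>" "even (snd (\<Psi> h))" for h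
    using cases[OF that] \<theta>_eigen[OF that] that(1) \<theta>_nonzero two_nonzero by (auto simp: z_minus_def field_simps)
  then obtain p2 q2 where pq2: "p2 \<in> F" "q2 \<in> F" "z_minus / \<theta> = p2 + q2 * r"
    using fixed_by_ker_chi_x by blast
  have "z = z_plus + z_minus" using two_nonzero by (simp add: z_plus_def z_minus_def field_simps)
  also have "z_minus = (p2 + q2 * r) * \<theta>" using pq2(3) \<theta>_nonzero by (simp add: field_simps)
  finally show thesis using that pq1 pq2 by simp
qed

lemma gal_auts_C4_field_eqI:
  assumes t1: "t1 \<in> gal_auts F C4_field" and t2: "t2 \<in> gal_auts F C4_field"
    and "t1 r = t2 r" "t1 \<theta> = t2 \<theta>"
  shows "t1 = t2"
proof
  fix z
  show "t1 z = t2 z"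
  proof (cases "z \<in> C4_field")
    case True
    then obtain p1 q1 p2 q2 where pq: "p1 \<in> F" "q1 \<in> F" "p2 \<in> F" "q2 \<in> F"
      and z: "z = p1 + q1 * r + (p2 + q2 * r) * \<theta>" by (rule C4_field_decomp)
    note closed = is_subfieldD(3,5)[OF is_subfield_C4_field]
    have mem: "p1 \<in> C4_field" "q1 \<in> C4_field" "p2 \<in> C4_field" "q2 \<in> C4_field"
      using pq F_subset_C4_field by auto
    have t_z: "t z = p1 + q1 * t r + (p2 + q2 * t r) * t \<theta>" if "t \<in> gal_auts F C4_field" for t
      using gal_autsD(1,2,4)[OF is_subfield_C4_field that] pq mem r_mem_C4_field \<theta>_mem_C4_field
      by (simp add: z closed)
    show ?thesis using t_z[OF t1] t_z[OF t2] assms(3,4) by simp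
  qed (simp add: gal_autsD(5)[OF is_subfield_C4_field t1] gal_autsD(5)[OF is_subfield_C4_field t2])
qed

lemma restrict_aut_C4_field_gal_auts:
  "g \<in> carrier \<Gamma> \<Longrightarrow> restrict_aut C4_field g \<in> gal_auts F C4_field"
  by (rule restrict_aut_gal_auts[of C4_field g]) (use is_subfield_C4_field C4_field_stable in auto)

lemma restrict_aut_C4_field_mult:
  "g \<in> carrier \<Gamma> \<Longrightarrow> h \<in> carrier \<Gamma> \<Longrightarrow>
    restrict_aut C4_field (g \<otimes>\<^bsub>\<Gamma>\<^esub> h) = restrict_aut C4_field g \<circ> restrict_aut C4_field h"
  by (rule restrict_aut_mult[of C4_field g h]) (use is_subfield_C4_field C4_field_stable in auto)

lemma gal_auts_C4_field_cases:
  assumes t: "t \<in> gal_auts F C4_field"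
  shows "\<exists>n<4::nat. t = restrict_aut C4_field (X [^]\<^bsub>\<Gamma>\<^esub> n)"
proof -
  note t_hom = gal_autsD[OF is_subfield_C4_field t]
  have "t r * t r = r * r" using t_hom(2,4) r_mem_C4_field r_square_mem_F by metis
  then have t_r: "t r = r \<or> t r = - r" by (simp add: square_eq_iff)
  have "h (\<theta> * \<theta>) = \<theta> * \<theta>" if "h \<in> carrier \<Gamma>" "even (snd (\<Psi> h))" for h
    using that \<theta>_eigen[OF that] by (simp add: chi_xx_def)
  then obtain p q where pq: "p \<in> F" "q \<in> F" "\<theta> * \<theta> = p + q * r"
    using fixed_by_ker_chi_x by blast
  have mem: "p \<in> C4_field" "q \<in> C4_field" using pq F_subset_C4_field by auto
  have "t \<theta> * t \<theta> = t (p + q * r)"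
    using t_hom(2) \<theta>_mem_C4_field pq(3) by metis
  then have t_\<theta>: "t \<theta> * t \<theta> = p + q * t r"
    using t_hom(1,2,4) pq mem r_mem_C4_field is_subfieldD(5)[OF is_subfield_C4_field] by simp
  have "X \<theta> * X \<theta> = X (p + q * r)" using pq(3) by (metis Gal_mult XY_closed(1))
  then have X_\<theta>: "X \<theta> * X \<theta> = p - q * r" using pq by (simp add: Gal_fixes_F)
  have pow: "(X [^]\<^bsub>\<Gamma>\<^esub> n) z = (X ^^ n) z" for n z
    by (induction n arbitrary: z) (simp_all add: Gal_mult_apply Gal_one_apply funpow_swap1)
  have agree: "t = restrict_aut C4_field (X [^]\<^bsub>\<Gamma>\<^esub> n)"
    if "t r = (X ^^ n) r" "t \<theta> = (X ^^ n) \<theta>" for n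
    using that pow r_mem_C4_field \<theta>_mem_C4_field restrict_aut_C4_field_gal_auts[of "X [^]\<^bsub>\<Gamma>\<^esub> n"]
    by (intro gal_auts_C4_field_eqI[OF t]) (simp_all add: restrict_aut_def)
  have less_4: "(0::nat) < 4" "(1::nat) < 4" "(2::nat) < 4" "(3::nat) < 4" by simp_all
  show ?thesis
  proof (cases "t r = r")
    case True
    then have "t \<theta> * t \<theta> = \<theta> * \<theta>" using t_\<theta> pq(3) by simp
    then have "t \<theta> = \<theta> \<or> t \<theta> = - \<theta>" by (simp add: square_eq_iff)
    then have "t = restrict_aut C4_field (X [^]\<^bsub>\<Gamma>\<^esub> (0::nat)) \<or> t = restrict_aut C4_field (X [^]\<^bsub>\<Gamma>\<^esub> (2::nat))"
      using agree[of 0] agree[of 2] True by (auto simp: numeral_eq_Suc)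
    then show ?thesis using less_4 by blast
  next
    case False
    then have "t \<theta> * t \<theta> = X \<theta> * X \<theta>" using t_r t_\<theta> X_\<theta> by simp
    then have "t \<theta> = X \<theta> \<or> t \<theta> = - X \<theta>" by (simp add: square_eq_iff)
    then have "t = restrict_aut C4_field (X [^]\<^bsub>\<Gamma>\<^esub> (1::nat)) \<or> t = restrict_aut C4_field (X [^]\<^bsub>\<Gamma>\<^esub> (3::nat))"
      using agree[of 1] agree[of 3] False t_r by (auto simp: numeral_eq_Suc)
    then show ?thesis using less_4 by blast
  qed
qed

lemma X_pow_mod_4: "X [^]\<^bsub>\<Gamma>\<^esub> (n::nat) = X [^]\<^bsub>\<Gamma>\<^esub> (n mod 4)"
proof -
  have "X [^]\<^bsub>\<Gamma>\<^esub> n = (X [^]\<^bsub>\<Gamma>\<^esub> (4::nat)) [^]\<^bsub>\<Gamma>\<^esub> (n div 4) \<otimes>\<^bsub>\<Gamma>\<^esub> X [^]\<^bsub>\<Gamma>\<^esub> (n mod 4)"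
    by (simp add: Gal.nat_pow_pow Gal.nat_pow_mult)
  then show ?thesis by (simp add: X_pow_4)
qed

definition C4_to_gal :: "int \<Rightarrow> 'l \<Rightarrow> 'l" where
  "C4_to_gal k = restrict_aut C4_field (X [^]\<^bsub>\<Gamma>\<^esub> nat k)"

lemma C4_to_gal_hom: "C4_to_gal \<in> hom C4 (gal_group F C4_field)"
proof (rule homI)
  fix k l assume "k \<in> carrier C4" "l \<in> carrier C4"
  then have "nat ((k + l) mod 4) = (nat k + nat l) mod 4"
    by (auto simp: carrier_integer_mod_group nat_mod_distrib nat_add_distrib)
  then have "C4_to_gal (k \<otimes>\<^bsub>C4\<^esub> l) = restrict_aut C4_field (X [^]\<^bsub>\<Gamma>\<^esub> nat k \<otimes>\<^bsub>\<Gamma>\<^esub> X [^]\<^bsub>\<Gamma>\<^esub> nat l)"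
    by (simp add: C4_to_gal_def Gal.nat_pow_mult flip: X_pow_mod_4)
  also have "\<dots> = C4_to_gal k \<otimes>\<^bsub>gal_group F C4_field\<^esub> C4_to_gal l"
    by (subst restrict_aut_C4_field_mult) (simp_all add: gal_group_mult C4_to_gal_def)
  finally show "C4_to_gal (k \<otimes>\<^bsub>C4\<^esub> l) = C4_to_gal k \<otimes>\<^bsub>gal_group F C4_field\<^esub> C4_to_gal l" .
qed (simp add: C4_to_gal_def gal_group_carrier
    restrict_aut_C4_field_gal_auts[OF Gal.nat_pow_closed[OF XY_closed(1)]])

lemma C4_to_gal_bij: "bij_betw C4_to_gal (carrier C4) (carrier (gal_group F C4_field))"
proof -
  have images: "C4_to_gal 0 r = r" "C4_to_gal 0 \<theta> = \<theta>" "C4_to_gal 1 r = - r" "C4_to_gal 1 \<theta> = X \<theta>"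
    "C4_to_gal 2 r = r" "C4_to_gal 2 \<theta> = - \<theta>" "C4_to_gal 3 r = - r" "C4_to_gal 3 \<theta> = - X \<theta>"
    using r_mem_C4_field \<theta>_mem_C4_field
    by (simp_all add: C4_to_gal_def restrict_aut_def numeral_eq_Suc Gal_mult_apply Gal_one_apply)
  have "r \<noteq> - r" "\<theta> \<noteq> - \<theta>" "X \<theta> \<noteq> - X \<theta>"
    using two_nonzero r_nonzero \<theta>_nonzero X_\<theta>_nonzero by simp_all
  moreover have "C4_to_gal j r = C4_to_gal k r" "C4_to_gal j \<theta> = C4_to_gal k \<theta>"
    if "C4_to_gal j = C4_to_gal k" for j k
    using that by simp_all
  ultimately have "inj_on C4_to_gal {0, 1, 2, 3}"
    unfolding inj_on_def using images by fastforce
  moreover have "C4_to_gal ` {0, 1, 2, 3} = gal_auts F C4_field"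
  proof
    show "C4_to_gal ` {0, 1, 2, 3} \<subseteq> gal_auts F C4_field"
      using restrict_aut_C4_field_gal_auts by (auto simp: C4_to_gal_def)
    show "gal_auts F C4_field \<subseteq> C4_to_gal ` {0, 1, 2, 3}"
    proof
      fix t assume "t \<in> gal_auts F C4_field"
      then obtain n :: nat where "n < 4" "t = restrict_aut C4_field (X [^]\<^bsub>\<Gamma>\<^esub> n)"
        using gal_auts_C4_field_cases by blast
      then show "t \<in> C4_to_gal ` {0, 1, 2, 3}"
        by (intro image_eqI[of _ _ "int n"]) (auto simp: C4_to_gal_def)
    qed
  qed
  moreover have "carrier C4 = {0, 1, 2, 3}" by (auto simp: carrier_integer_mod_group)
  ultimately show ?thesis by (simp add: bij_betw_def gal_group_carrier)
qed

lemma gal_group_C4_field: "gal_group F C4_field \<cong> C4"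
  using C4_to_gal_hom C4_to_gal_bij
  by (intro group.iso_sym[OF group_integer_mod_group] is_isoI) (simp add: iso_def)

lemma galois_ext_C4_field: "galois_ext F C4_field"
proof -
  have "x \<in> F" if x: "x \<in> C4_field" "\<forall>\<sigma>\<in>gal_auts F C4_field. \<sigma> x = x" for x
  proof (rule fixed_by_XY_mem_F)
    show "X x = x"
      using x restrict_aut_C4_field_gal_auts[OF XY_closed(1)] by (force simp: restrict_aut_def)
    show "Y x = x" using x by (simp add: C4_field_def Psi_XY)
  qed
  moreover have "algebraic_ext F C4_field"
    using galois by (auto simp: galois_ext_def algebraic_ext_def)
  ultimately show ?thesis
    using is_subfield_F is_subfield_C4_field F_subset_C4_field
      gal_autsD(4)[OF is_subfield_C4_field]
    by (auto simp: galois_ext_def gal_group_carrier)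
qed

lemma adjoin_r_subset_C4_field: "adjoin F r \<subseteq> C4_field"
  by (rule adjoin_least[OF is_subfield_C4_field F_subset_C4_field r_mem_C4_field])

end

context G1_galois_kummer
begin

lemma exists_C4_extension: "\<exists>E. galois_ext F E \<and> adjoin F r \<subseteq> E \<and> gal_group F E \<cong> C4"
proof -
  obtain \<theta> where "\<theta> \<noteq> 0" "\<And>g. g \<in> carrier \<Gamma> \<Longrightarrow> even (snd (\<Psi> g)) \<Longrightarrow> g \<theta> = chi_xx (\<Psi> g) * \<theta>"
    using exists_chi_xx_eigenvector by blast
  then interpret G1_galois_cyclic F X Y \<Psi> r \<theta>
    by unfold_locales auto
  show ?thesis using galois_ext_C4_field adjoin_r_subset_C4_field gal_group_C4_field by blast
qed

lemma adjoin_kummer_unique: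
  assumes "G1_galois_kummer F X Y \<Psi> s"
  shows "adjoin F s = adjoin F r"
proof -
  interpret S: G1_galois_kummer F X Y \<Psi> s by fact
  have "r * s \<in> F"
  proof -
    have "g (r * s) = r * s" if "g \<in> carrier \<Gamma>" for g
      using that by (simp add: r_eigen S.r_eigen chi_x_def)
    then show ?thesis using fixed_iff_mem_F by blast
  qed
  then show ?thesis
    using adjoin_subset_adjoin[OF r_nonzero r_square_mem_F] S.r_square_mem_F
      adjoin_subset_adjoin[OF S.r_nonzero, of F r] by (simp add: mult.commute subset_antisym)
qed

end

context G1_galois
begin

lemma exists_kummer_generator: obtains r where "G1_galois_kummer F X Y \<Psi> r"
  using exists_chi_x_eigenvector G1_galois_kummer_axioms.intro G1_galois_kummer.intro G1_galois_axioms
  by metis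

lemma kummer_of_C4_subfield:
  assumes "a \<in> F" "r ^ 2 = a" "r \<notin> F" "adjoin F r \<subseteq> E" "galois_ext F E" "gal_group F E \<cong> C4"
  shows "G1_galois_kummer F X Y \<Psi> r"
proof unfold_locales
  show "r \<noteq> 0" using assms(3) zero_one_mem_F by auto
  show "g r = chi_x (\<Psi> g) * r" if "g \<in> carrier \<Gamma>" for g
    using assms mem_adjoin that
    by (intro C4_extension_sqrt_eigen[of r E]) (auto simp: C4_extension_def power2_eq_square)
qed

end

theorem proposition3p8:
  fixes F :: "'l::field set"
  assumes "(2::'l) \<noteq> 0"
    and "galois_ext F (UNIV :: 'l set)"
    and "gal_group F (UNIV :: 'l set) \<cong> G1"
  shows "(\<exists>!K. (\<exists>a\<in>F. \<exists>r. r ^ 2 = a \<and> r \<notin> F \<and> K = adjoin F r) \<and>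
              (\<exists>E. galois_ext F E \<and> K \<subseteq> E \<and> gal_group F E \<cong> C4)) \<and>
         (\<forall>K a r E. a \<in> F \<and> r ^ 2 = a \<and> r \<notin> F \<and> K = adjoin F r \<and>
              galois_ext F E \<and> K \<subseteq> E \<and> gal_group F E \<cong> C4
            \<longrightarrow> \<not> rigid F (- a))"
proof -
  obtain X Y \<Psi> where "G1_galois F X Y \<Psi>" using G1_galois_of_iso assms by blast
  then interpret G1_galois F X Y \<Psi> .
  obtain r where "G1_galois_kummer F X Y \<Psi> r" by (rule exists_kummer_generator)
  then interpret R: G1_galois_kummer F X Y \<Psi> r .
  show ?thesis
  proof (intro conjI allI impI)
    show "\<exists>!K. (\<exists>a\<in>F. \<exists>s. s ^ 2 = a \<and> s \<notin> F \<and> K = adjoin F s) \<and>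
        (\<exists>E. galois_ext F E \<and> K \<subseteq> E \<and> gal_group F E \<cong> C4)"
    proof (rule ex1I[of _ "adjoin F r"])
      show "(\<exists>a\<in>F. \<exists>s. s ^ 2 = a \<and> s \<notin> F \<and> adjoin F r = adjoin F s) \<and>
          (\<exists>E. galois_ext F E \<and> adjoin F r \<subseteq> E \<and> gal_group F E \<cong> C4)"
        using R.r_square_mem_F R.r_not_mem_F R.exists_C4_extension by (auto simp: power2_eq_square)
      fix K assume "(\<exists>a\<in>F. \<exists>s. s ^ 2 = a \<and> s \<notin> F \<and> K = adjoin F s) \<and>
          (\<exists>E. galois_ext F E \<and> K \<subseteq> E \<and> gal_group F E \<cong> C4)"
      then show "K = adjoin F r"
        using kummer_of_C4_subfield R.adjoin_kummer_unique by metis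
    qed
  next
    fix K a s E assume hyp: "a \<in> F \<and> s ^ 2 = a \<and> s \<notin> F \<and> K = adjoin F s \<and>
        galois_ext F E \<and> K \<subseteq> E \<and> gal_group F E \<cong> C4"
    then interpret S: G1_galois_kummer F X Y \<Psi> s
      using kummer_of_C4_subfield by blast
    show "\<not> rigid F (- a)" using S.not_rigid hyp by (auto simp: power2_eq_square)
  qed
qed

end
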